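(* Assume the setting below with $\mathcal{L}\in H^{-2}(\Omega)^k$. Let $\mathcal{D}=(X_{\mathcal{D},0},\Pi_{\mathcal{D}},\nabla_{\mathcal{D}},\mathcal{H}_{\mathcal{D}})$ be a Hessian discretisation and $E_{\mathcal{D}}$ a companion operator for it with $\Gamma(E_{\mathcal{D}})<\infty$. Then there exists at least one solution $\Psi_{\mathcal{D}}\in X_{\mathcal{D},0}^k$ of the Hessian scheme $$\mathcal{A}(\mathcal{H}_{\mathcal{D}}\Psi_{\mathcal{D}},\mathcal{H}_{\mathcal{D}}\Phi_{\mathcal{D}})+\mathcal{B}(\mathcal{H}_{\mathcal{D}}\Psi_{\mathcal{D}},\nabla_{\mathcal{D}}\Psi_{\mathcal{D}},\nabla_{\mathcal{D}}\Phi_{\mathcal{D}})=\mathcal{L}(E_{\mathcal{D}}\Phi_{\mathcal{D}})\quad\text{for all }\Phi_{\mathcal{D}}\in X_{\mathcal{D},0}^k.$$ Furthermore, if $$\|\mathcal{L}\|_{-2}<\frac{\overline{\alpha}^2}{\|\mathcal{B}\|\,C_{\mathcal{D}}^2\,\Gamma(E_{\mathcal{D}})\,C_{2,\rm eq}},$$ then this solution is unique.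
   Context: Let $\Omega\subset\mathbb{R}^d$ ($d\ge1$) be a bounded domain, $k\ge1$ an integer, $X=H^2_0(\Omega)$. For a function space $E$, norms on $E^k$ are written as on $E$; $\|\cdot\|$ is the $L^2$ norm, $\|\cdot\|_{0,4}$ the $L^4$ norm, $\|\cdot\|_m$ and $|\cdot|_m$ the $H^m$ norm and seminorm. $\|\cdot\|_{-2}$ is the dual norm on $H^{-2}(\Omega)^k=(H^2_0(\Omega)^k)'$ with respect to $\|\cdot\|_2$. $\mathcal{H}$ denotes the Hessian; for $\Psi=(\psi_1,\dots,\psi_k)$, $\mathcal{H}\Psi$, $\nabla\Psi$ act componentwise. $C_{2,\rm eq}$ is a constant with $\|\varphi\|_2\le C_{2,\rm eq}|\varphi|_2$ for all $\varphi\in H^2_0(\Omega)$ (here $|\varphi|_2=\|\mathcal{H}\varphi\|$). Standing assumptions: $\mathcal{A}$ is a continuous bilinear form on $L^2(\Omega;\mathbb{R}^{d\times d})^k$, coercive with constant $\overline{\alpha}>0$ ($\mathcal{A}(\Xi,\Xi)\ge\overline{\alpha}\|\Xi\|^2$); $\mathcal{B}$ is a continuous trilinear form on $L^2(\Omega;\mathbb{R}^{d\times d})^k\times L^4(\Omega;\mathbb{R}^d)^k\times L^4(\Omega;\mathbb{R}^d)^k$ with norm $\|\mathcal{B}\|$, and $\mathcal{B}(\Xi,\Theta,\Theta)=0$ for all $\Xi\in L^2(\Omega;\mathbb{R}^{d\times d})^k$, $\Theta\in L^4(\Omega;\mathbb{R}^d)^k$; $\mathcal{L}$ is a continuous linear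 functional on $H^2_0(\Omega)^k$. A Hessian discretisation is a quadruple $\mathcal{D}=(X_{\mathcal{D},0},\Pi_{\mathcal{D}},\nabla_{\mathcal{D}},\mathcal{H}_{\mathcal{D}})$ where $X_{\mathcal{D},0}$ is a finite-dimensional real vector space and $\Pi_{\mathcal{D}}:X_{\mathcal{D},0}\to L^2(\Omega)$, $\nabla_{\mathcal{D}}:X_{\mathcal{D},0}\to L^4(\Omega;\mathbb{R}^d)$, $\mathcal{H}_{\mathcal{D}}:X_{\mathcal{D},0}\to L^2(\Omega;\mathbb{R}^{d\times d})$ are linear maps such that $\|w\|_{\mathcal{D}}:=\|\mathcal{H}_{\mathcal{D}}w\|$ is a norm on $X_{\mathcal{D},0}$. A companion operator is a linear map $E_{\mathcal{D}}:X_{\mathcal{D},0}\to H^2_0(\Omega)$, and $\Gamma(E_{\mathcal{D}}):=\sup_{\psi\in X_{\mathcal{D},0}\setminus\{0\}}\|\mathcal{H}E_{\mathcal{D}}\psi\|/\|\psi\|_{\mathcal{D}}$. All these maps act componentwise on $X_{\mathcal{D},0}^k$ (and $\|\cdot\|_{\mathcal{D}}$ is extended accordingly). Finally $C_{\mathcal{D}}:=\max_{w\in X_{\mathcal{D},0}\setminus\{0\}}\max\{\|\Pi_{\mathcal{D}}w\|/\|w\|_{\mathcal{D}},\ \|\nabla_{\mathcal{D}}w\|_{0,4}/\|w\|_{\mathcal{D}}\}$. *)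

theory Defs
  imports "HOL-Analysis.Analysis"
begin

section \<open>Lebesgue spaces on a domain (functions represented pointwise)\<close>

definition Lp_on :: "real \<Rightarrow> ('a::euclidean_space) set \<Rightarrow> ('a \<Rightarrow> 'b::real_normed_vector) \<Rightarrow> bool" where
  "Lp_on p \<Omega> f \<longleftrightarrow> f \<in> borel_measurable (lebesgue_on \<Omega>) \<and>
     integrable (lebesgue_on \<Omega>) (\<lambda>x. norm (f x) powr p)"

definition Lp_norm :: "real \<Rightarrow> ('a::euclidean_space) set \<Rightarrow> ('a \<Rightarrow> 'b::real_normed_vector) \<Rightarrow> real" where
  "Lp_norm p \<Omega> f = (\<integral>x. norm (f x) powr p \<partial>lebesgue_on \<Omega>) powr (1 / p)"

definition lincomb :: "real \<Rightarrow> ('a \<Rightarrow> 'b::real_vector) \<Rightarrow> real \<Rightarrow> ('a \<Rightarrow> 'b) \<Rightarrow> 'a \<Rightarrow> 'b" where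
  "lincomb a u b v = (\<lambda>x. a *\<^sub>R u x + b *\<^sub>R v x)"

definition pd :: "'n::finite \<Rightarrow> (real^'n \<Rightarrow> real) \<Rightarrow> real^'n \<Rightarrow> real" where
  "pd i f x = frechet_derivative f (at x) (axis i 1)"

definition iter_pd :: "'n::finite list \<Rightarrow> (real^'n \<Rightarrow> real) \<Rightarrow> real^'n \<Rightarrow> real" where
  "iter_pd is f = foldr pd is f"

definition smooth_fun :: "(real^'n::finite \<Rightarrow> real) \<Rightarrow> bool" where
  "smooth_fun f \<longleftrightarrow> (\<forall>is x. iter_pd is f differentiable (at x))"

definition test_fun :: "(real^'n::finite) set \<Rightarrow> (real^'n \<Rightarrow> real) \<Rightarrow> bool" where
  "test_fun \<Omega> \<phi> \<longleftrightarrow> smooth_fun \<phi> \<and> compact (closure {x. \<phi> x \<noteq> 0}) \<and>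
     closure {x. \<phi> x \<noteq> 0} \<subseteq> \<Omega>"

definition cgrad :: "(real^'n::finite \<Rightarrow> real) \<Rightarrow> real^'n \<Rightarrow> real^'n" where
  "cgrad f x = (\<chi> j. pd j f x)"

definition chess :: "(real^'n::finite \<Rightarrow> real) \<Rightarrow> real^'n \<Rightarrow> real^'n^'n" where
  "chess f x = (\<chi> i j. pd i (pd j f) x)"

text \<open>u is the H^2-limit of test functions, with limiting gradient g and Hessian H
  (H^2_0(Omega) = closure of C_c^infty(Omega) in H^2(Omega)).\<close>
definition H20_approx :: "(real^'n::finite) set \<Rightarrow> (real^'n \<Rightarrow> real) \<Rightarrow> (real^'n \<Rightarrow> real^'n)
    \<Rightarrow> (real^'n \<Rightarrow> real^'n^'n) \<Rightarrow> bool" where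
  "H20_approx \<Omega> u g H \<longleftrightarrow> Lp_on 2 \<Omega> u \<and> Lp_on 2 \<Omega> g \<and> Lp_on 2 \<Omega> H \<and>
     (\<exists>\<phi>::nat \<Rightarrow> real^'n \<Rightarrow> real. (\<forall>n. test_fun \<Omega> (\<phi> n)) \<and>
        (\<lambda>n. Lp_norm 2 \<Omega> (\<lambda>x. \<phi> n x - u x)) \<longlonglongrightarrow> 0 \<and>
        (\<lambda>n. Lp_norm 2 \<Omega> (\<lambda>x. cgrad (\<phi> n) x - g x)) \<longlonglongrightarrow> 0 \<and>
        (\<lambda>n. Lp_norm 2 \<Omega> (\<lambda>x. chess (\<phi> n) x - H x)) \<longlonglongrightarrow> 0)"

definition H20 :: "(real^'n::finite) set \<Rightarrow> (real^'n \<Rightarrow> real) \<Rightarrow> bool" where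
  "H20 \<Omega> u \<longleftrightarrow> (\<exists>g H. H20_approx \<Omega> u g H)"

definition wgrad :: "(real^'n::finite) set \<Rightarrow> (real^'n \<Rightarrow> real) \<Rightarrow> real^'n \<Rightarrow> real^'n" where
  "wgrad \<Omega> u = fst (SOME (g, H). H20_approx \<Omega> u g H)"

definition whess :: "(real^'n::finite) set \<Rightarrow> (real^'n \<Rightarrow> real) \<Rightarrow> real^'n \<Rightarrow> real^'n^'n" where
  "whess \<Omega> u = snd (SOME (g, H). H20_approx \<Omega> u g H)"

definition H2_norm :: "(real^'n::finite) set \<Rightarrow> (real^'n \<Rightarrow> real) \<Rightarrow> real" where
  "H2_norm \<Omega> u = sqrt ((Lp_norm 2 \<Omega> u)\<^sup>2 + (Lp_norm 2 \<Omega> (wgrad \<Omega> u))\<^sup>2 + (Lp_norm 2 \<Omega> (whess \<Omega> u))\<^sup>2)"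

definition H2_seminorm :: "(real^'n::finite) set \<Rightarrow> (real^'n \<Rightarrow> real) \<Rightarrow> real" where
  "H2_seminorm \<Omega> u = Lp_norm 2 \<Omega> (whess \<Omega> u)"

definition H20k :: "(real^'n::finite) set \<Rightarrow> ('k::finite \<Rightarrow> real^'n \<Rightarrow> real) \<Rightarrow> bool" where
  "H20k \<Omega> u \<longleftrightarrow> (\<forall>i. H20 \<Omega> (u i))"

definition H2k_norm :: "(real^'n::finite) set \<Rightarrow> ('k::finite \<Rightarrow> real^'n \<Rightarrow> real) \<Rightarrow> real" where
  "H2k_norm \<Omega> u = sqrt (\<Sum>i\<in>UNIV. (H2_norm \<Omega> (u i))\<^sup>2)"

definition dual_norm :: "(real^'n::finite) set \<Rightarrow> (('k::finite \<Rightarrow> real^'n \<Rightarrow> real) \<Rightarrow> real) \<Rightarrow> real" where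
  "dual_norm \<Omega> L = (SUP u\<in>{u. H20k \<Omega> u \<and> u \<noteq> (\<lambda>i x. 0)}. \<bar>L u\<bar> / H2k_norm \<Omega> u)"

definition cont_linear_functional :: "(real^'n::finite) set \<Rightarrow> (('k::finite \<Rightarrow> real^'n \<Rightarrow> real) \<Rightarrow> real) \<Rightarrow> bool" where
  "cont_linear_functional \<Omega> L \<longleftrightarrow>
     (\<forall>u v a b. H20k \<Omega> u \<and> H20k \<Omega> v \<longrightarrow>
        L (\<lambda>i. lincomb a (u i) b (v i)) = a * L u + b * L v) \<and>
     (\<exists>M. \<forall>u. H20k \<Omega> u \<longrightarrow> \<bar>L u\<bar> \<le> M * H2k_norm \<Omega> u)"

definition cont_bilinear_on :: "('a::euclidean_space) set \<Rightarrow> (('a \<Rightarrow> 'b::real_normed_vector) \<Rightarrow> ('a \<Rightarrow> 'b) \<Rightarrow> real) \<Rightarrow> bool" where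
  "cont_bilinear_on \<Omega> A \<longleftrightarrow>
     (\<forall>u v w a b. Lp_on 2 \<Omega> u \<and> Lp_on 2 \<Omega> v \<and> Lp_on 2 \<Omega> w \<longrightarrow>
        A (lincomb a u b v) w = a * A u w + b * A v w \<and>
        A w (lincomb a u b v) = a * A w u + b * A w v) \<and>
     (\<exists>M. \<forall>u v. Lp_on 2 \<Omega> u \<and> Lp_on 2 \<Omega> v \<longrightarrow>
        \<bar>A u v\<bar> \<le> M * Lp_norm 2 \<Omega> u * Lp_norm 2 \<Omega> v)"

definition cont_trilinear_on :: "('a::euclidean_space) set \<Rightarrow>
    (('a \<Rightarrow> 'b::real_normed_vector) \<Rightarrow> ('a \<Rightarrow> 'c::real_normed_vector) \<Rightarrow> ('a \<Rightarrow> 'c) \<Rightarrow> real) \<Rightarrow> bool" where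
  "cont_trilinear_on \<Omega> B \<longleftrightarrow>
     (\<forall>u u' v v' w w' a b. Lp_on 2 \<Omega> u \<and> Lp_on 2 \<Omega> u' \<and> Lp_on 4 \<Omega> v \<and> Lp_on 4 \<Omega> v'
          \<and> Lp_on 4 \<Omega> w \<and> Lp_on 4 \<Omega> w' \<longrightarrow>
        B (lincomb a u b u') v w = a * B u v w + b * B u' v w \<and>
        B u (lincomb a v b v') w = a * B u v w + b * B u v' w \<and>
        B u v (lincomb a w b w') = a * B u v w + b * B u v w') \<and>
     (\<exists>M. \<forall>u v w. Lp_on 2 \<Omega> u \<and> Lp_on 4 \<Omega> v \<and> Lp_on 4 \<Omega> w \<longrightarrow>
        \<bar>B u v w\<bar> \<le> M * Lp_norm 2 \<Omega> u * Lp_norm 4 \<Omega> v * Lp_norm 4 \<Omega> w)"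

definition trilinear_norm :: "('a::euclidean_space) set \<Rightarrow>
    (('a \<Rightarrow> 'b::real_normed_vector) \<Rightarrow> ('a \<Rightarrow> 'c::real_normed_vector) \<Rightarrow> ('a \<Rightarrow> 'c) \<Rightarrow> real) \<Rightarrow> real" where
  "trilinear_norm \<Omega> B = (SUP (u, v, w)\<in>{(u, v, w). Lp_on 2 \<Omega> u \<and> Lp_on 4 \<Omega> v \<and> Lp_on 4 \<Omega> w}.
      \<bar>B u v w\<bar> / (Lp_norm 2 \<Omega> u * Lp_norm 4 \<Omega> v * Lp_norm 4 \<Omega> w))"

definition disc_norm :: "(real^'n::finite) set \<Rightarrow> ('x \<Rightarrow> real^'n \<Rightarrow> real^'n^'n) \<Rightarrow> 'x \<Rightarrow> real" where
  "disc_norm \<Omega> Hd w = Lp_norm 2 \<Omega> (Hd w)"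

definition hessian_discretisation :: "(real^'n::finite) set \<Rightarrow> ('x::euclidean_space \<Rightarrow> real^'n \<Rightarrow> real)
    \<Rightarrow> ('x \<Rightarrow> real^'n \<Rightarrow> real^'n) \<Rightarrow> ('x \<Rightarrow> real^'n \<Rightarrow> real^'n^'n) \<Rightarrow> bool" where
  "hessian_discretisation \<Omega> Pd Gd Hd \<longleftrightarrow>
     (\<forall>w. Lp_on 2 \<Omega> (Pd w)) \<and> (\<forall>w. Lp_on 4 \<Omega> (Gd w)) \<and> (\<forall>w. Lp_on 2 \<Omega> (Hd w)) \<and>
     (\<forall>x. linear (\<lambda>w. Pd w x)) \<and> (\<forall>x. linear (\<lambda>w. Gd w x)) \<and> (\<forall>x. linear (\<lambda>w. Hd w x)) \<and>
     (\<forall>w. disc_norm \<Omega> Hd w = 0 \<longrightarrow> w = 0)"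

definition companion :: "(real^'n::finite) set \<Rightarrow> ('x::euclidean_space \<Rightarrow> real^'n \<Rightarrow> real) \<Rightarrow> bool" where
  "companion \<Omega> Ed \<longleftrightarrow> (\<forall>w. H20 \<Omega> (Ed w)) \<and> (\<forall>x. linear (\<lambda>w. Ed w x))"

definition Gamma_E :: "(real^'n::finite) set \<Rightarrow> ('x::euclidean_space \<Rightarrow> real^'n \<Rightarrow> real^'n^'n)
    \<Rightarrow> ('x \<Rightarrow> real^'n \<Rightarrow> real) \<Rightarrow> real" where
  "Gamma_E \<Omega> Hd Ed = (SUP \<psi>\<in>UNIV - {0}. Lp_norm 2 \<Omega> (whess \<Omega> (Ed \<psi>)) / disc_norm \<Omega> Hd \<psi>)"

definition Gamma_finite :: "(real^'n::finite) set \<Rightarrow> ('x::euclidean_space \<Rightarrow> real^'n \<Rightarrow> real^'n^'n)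
    \<Rightarrow> ('x \<Rightarrow> real^'n \<Rightarrow> real) \<Rightarrow> bool" where
  "Gamma_finite \<Omega> Hd Ed \<longleftrightarrow>
     bdd_above ((\<lambda>\<psi>. Lp_norm 2 \<Omega> (whess \<Omega> (Ed \<psi>)) / disc_norm \<Omega> Hd \<psi>) ` (UNIV - {0}))"

definition C_disc :: "(real^'n::finite) set \<Rightarrow> ('x::euclidean_space \<Rightarrow> real^'n \<Rightarrow> real)
    \<Rightarrow> ('x \<Rightarrow> real^'n \<Rightarrow> real^'n) \<Rightarrow> ('x \<Rightarrow> real^'n \<Rightarrow> real^'n^'n) \<Rightarrow> real" where
  "C_disc \<Omega> Pd Gd Hd = (SUP w\<in>UNIV - {0}.
      max (Lp_norm 2 \<Omega> (Pd w) / disc_norm \<Omega> Hd w) (Lp_norm 4 \<Omega> (Gd w) / disc_norm \<Omega> Hd w))"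

text \<open>Componentwise action on k-tuples: a k-tuple of fields is one field with values in V^k.\<close>
definition compw :: "('x \<Rightarrow> 'a \<Rightarrow> 'b) \<Rightarrow> 'x^'k \<Rightarrow> 'a \<Rightarrow> 'b^'k" where
  "compw F \<Psi> = (\<lambda>x. \<chi> i. F (\<Psi> $ i) x)"

definition hessian_scheme_sol :: "(((real^'n::finite) \<Rightarrow> (real^'n^'n)^'k::finite) \<Rightarrow> (real^'n \<Rightarrow> (real^'n^'n)^'k) \<Rightarrow> real)
    \<Rightarrow> ((real^'n \<Rightarrow> (real^'n^'n)^'k) \<Rightarrow> (real^'n \<Rightarrow> (real^'n)^'k) \<Rightarrow> (real^'n \<Rightarrow> (real^'n)^'k) \<Rightarrow> real)
    \<Rightarrow> (('k \<Rightarrow> real^'n \<Rightarrow> real) \<Rightarrow> real)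
    \<Rightarrow> ('x \<Rightarrow> real^'n \<Rightarrow> real^'n) \<Rightarrow> ('x \<Rightarrow> real^'n \<Rightarrow> real^'n^'n) \<Rightarrow> ('x \<Rightarrow> real^'n \<Rightarrow> real)
    \<Rightarrow> 'x^'k \<Rightarrow> bool" where
  "hessian_scheme_sol A B L Gd Hd Ed \<Psi> \<longleftrightarrow>
     (\<forall>\<Phi>. A (compw Hd \<Psi>) (compw Hd \<Phi>) + B (compw Hd \<Psi>) (compw Gd \<Psi>) (compw Gd \<Phi>)
            = L (\<lambda>i. Ed (\<Phi> $ i)))"

end

theory Submission
  imports Defs
begin

text \<open>
  Existence: pairing the residual of the scheme at \<open>\<Psi>\<close> with \<open>\<Psi>\<close> itself kills the
  convective term, because \<open>\<B>(\<Xi>, \<Theta>, \<Theta>) = 0\<close>, so by coercivity of \<open>\<A>\<close> it is at least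
  \<open>\<alpha> \<parallel>\<Psi>\<parallel>\<^sub>D\<^sup>2 - K |\<Psi>|\<close>, hence positive on a large sphere of the finite-dimensional space
  \<open>X\<^sub>D\<^sub>,\<^sub>0\<^sup>k\<close>. Brouwer's fixed point theorem then gives a zero of the residual.

  Uniqueness: testing a solution with itself gives the a priori bound
  \<open>\<alpha> \<parallel>\<Psi>\<parallel>\<^sub>D \<le> \<parallel>\<L>\<parallel> C\<^sub>2 \<Gamma>\<close>. For two solutions the difference \<open>\<delta>\<close> satisfies
  \<open>\<A>(\<delta>, \<delta>) = -\<B>(\<delta>, \<Psi>\<^sub>2, \<delta>)\<close>, so \<open>\<alpha> \<parallel>\<delta>\<parallel>\<^sup>2 \<le> \<parallel>\<B>\<parallel> C\<^sub>D\<^sup>2 \<parallel>\<Psi>\<^sub>2\<parallel> \<parallel>\<delta>\<parallel>\<^sup>2\<close>; combined with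
  the a priori bound this contradicts the smallness condition unless \<open>\<delta> = 0\<close>.
\<close>

section \<open>Lebesgue norms\<close>

lemma Lp_on_2_iff:
  "Lp_on 2 \<Omega> f \<longleftrightarrow> f \<in> borel_measurable (lebesgue_on \<Omega>) \<and>
     integrable (lebesgue_on \<Omega>) (\<lambda>x. (norm (f x))\<^sup>2)"
  unfolding Lp_on_def by simp

lemma Lp_on_4_iff:
  "Lp_on 4 \<Omega> f \<longleftrightarrow> f \<in> borel_measurable (lebesgue_on \<Omega>) \<and>
     integrable (lebesgue_on \<Omega>) (\<lambda>x. (norm (f x)) ^ 4)"
  unfolding Lp_on_def by simp

lemma Lp_norm_nonneg: "0 \<le> Lp_norm p \<Omega> f"
  unfolding Lp_norm_def by simp

lemma Lp_norm_2_eq: "Lp_norm 2 \<Omega> f = sqrt (\<integral>x. (norm (f x))\<^sup>2 \<partial>lebesgue_on \<Omega>)"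
  unfolding Lp_norm_def by (simp add: powr_half_sqrt integral_nonneg_AE)

lemma Lp_norm_2_sq: "(Lp_norm 2 \<Omega> f)\<^sup>2 = (\<integral>x. (norm (f x))\<^sup>2 \<partial>lebesgue_on \<Omega>)"
  unfolding Lp_norm_2_eq by (simp add: integral_nonneg_AE)

lemma Lp_norm_4_eq: "Lp_norm 4 \<Omega> f = (\<integral>x. (norm (f x)) ^ 4 \<partial>lebesgue_on \<Omega>) powr (1/4)"
  unfolding Lp_norm_def by simp

lemma Lp_on_zero: "0 < p \<Longrightarrow> Lp_on p \<Omega> (\<lambda>x. 0)"
  unfolding Lp_on_def by simp

lemma Lp_norm_zero: "0 < p \<Longrightarrow> Lp_norm p \<Omega> (\<lambda>x. 0) = 0"
  unfolding Lp_norm_def by simp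

lemma Lp_norm_scaleR:
  assumes "0 < p"
  shows "Lp_norm p \<Omega> (\<lambda>x. c *\<^sub>R f x) = \<bar>c\<bar> * Lp_norm p \<Omega> f"
  using assms by (simp add: Lp_norm_def powr_mult powr_powr)

lemma L2_inner_integrable:
  fixes f g :: "'a::euclidean_space \<Rightarrow> 'b::euclidean_space"
  assumes "Lp_on 2 \<Omega> f" "Lp_on 2 \<Omega> g"
  shows "integrable (lebesgue_on \<Omega>) (\<lambda>x. f x \<bullet> g x)"
proof (rule Bochner_Integration.integrable_bound)
  show "integrable (lebesgue_on \<Omega>) (\<lambda>x. (norm (f x))\<^sup>2 + (norm (g x))\<^sup>2)"
    using assms by (simp add: Lp_on_2_iff)
  show "(\<lambda>x. f x \<bullet> g x) \<in> borel_measurable (lebesgue_on \<Omega>)"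
    using assms by (simp add: Lp_on_2_iff borel_measurable_inner)
  have "\<bar>f x \<bullet> g x\<bar> \<le> (norm (f x))\<^sup>2 + (norm (g x))\<^sup>2" for x
    using Cauchy_Schwarz_ineq2[of "f x" "g x"] sum_squares_bound[of "norm (f x)" "norm (g x)"]
      mult_nonneg_nonneg[of "norm (f x)" "norm (g x)"] by simp
  then show "AE x in lebesgue_on \<Omega>. norm (f x \<bullet> g x) \<le> norm ((norm (f x))\<^sup>2 + (norm (g x))\<^sup>2)"
    by simp
qed

lemma Lp_norm_4_sq: "(Lp_norm 4 \<Omega> f)\<^sup>2 = sqrt (\<integral>x. (norm (f x)) ^ 4 \<partial>lebesgue_on \<Omega>)"
proof -
  define X where "X = (\<integral>x. (norm (f x)) ^ 4 \<partial>lebesgue_on \<Omega>)"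
  have "0 \<le> X" unfolding X_def by (simp add: integral_nonneg_AE)
  have "(X powr (1/4))\<^sup>2 = X powr (1/4 + 1/4)"
    by (simp only: power2_eq_square powr_add)
  also have "\<dots> = sqrt X"
    using \<open>0 \<le> X\<close> by (simp add: powr_half_sqrt)
  finally show ?thesis unfolding Lp_norm_4_eq X_def .
qed

lemma Lp_norm_4_le:
  assumes "(\<integral>x. (norm (f x)) ^ 4 \<partial>lebesgue_on \<Omega>) \<le> c ^ 4" "0 \<le> c"
  shows "Lp_norm 4 \<Omega> f \<le> c"
proof -
  have "Lp_norm 4 \<Omega> f \<le> (c ^ 4) powr (1/4)"
    unfolding Lp_norm_4_eq using assms(1) by (intro powr_mono2) (auto simp: integral_nonneg_AE)
  also have "\<dots> = c"
  proof -
    have "c ^ 4 = c powr 4" using assms(2) powr_realpow'[of c 4] by simp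
    then show ?thesis using assms(2) by (simp only: powr_powr) simp
  qed
  finally show ?thesis .
qed

lemma Cauchy_Schwarz_integral_nonneg:
  fixes f g :: "'a \<Rightarrow> real"
  assumes [measurable]: "f \<in> borel_measurable M" "g \<in> borel_measurable M"
    and f2: "integrable M (\<lambda>x. (f x)\<^sup>2)" and g2: "integrable M (\<lambda>x. (g x)\<^sup>2)"
    and nonneg: "\<And>x. 0 \<le> f x" "\<And>x. 0 \<le> g x"
  shows "integrable M (\<lambda>x. f x * g x)"
    and "(\<integral>x. f x * g x \<partial>M) \<le> sqrt (\<integral>x. (f x)\<^sup>2 \<partial>M) * sqrt (\<integral>x. (g x)\<^sup>2 \<partial>M)"
proof -
  show int: "integrable M (\<lambda>x. f x * g x)"
  proof (rule Bochner_Integration.integrable_bound[OF Bochner_Integration.integrable_add[OF f2 g2]])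
    have "f x * g x \<le> (f x)\<^sup>2 + (g x)\<^sup>2" for x
      using sum_squares_bound[of "f x" "g x"] mult_nonneg_nonneg[OF nonneg(1)[of x] nonneg(2)[of x]]
      by linarith
    then show "AE x in M. norm (f x * g x) \<le> norm ((f x)\<^sup>2 + (g x)\<^sup>2)"
      using nonneg by simp
  qed measurable
  have nn: "(\<integral>\<^sup>+x. ennreal (h x) \<partial>M) = ennreal (\<integral>x. h x \<partial>M)"
    if "integrable M h" "\<And>x. 0 \<le> h x" for h :: "'a \<Rightarrow> real"
    using that by (intro nn_integral_eq_integral) auto
  have "ennreal ((\<integral>x. f x * g x \<partial>M)\<^sup>2) = (\<integral>\<^sup>+x. ennreal (f x) * ennreal (g x) \<partial>M)\<^sup>2"
    using nn[OF int] nonneg by (simp add: ennreal_mult integral_nonneg_AE ennreal_power)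
  also have "\<dots> \<le> (\<integral>\<^sup>+x. ennreal (f x) ^ 2 \<partial>M) * (\<integral>\<^sup>+x. ennreal (g x) ^ 2 \<partial>M)"
    using Cauchy_Schwarz_nn_integral[of "\<lambda>x. ennreal (f x)" M "\<lambda>x. ennreal (g x)"] by simp
  also have "\<dots> = ennreal ((\<integral>x. (f x)\<^sup>2 \<partial>M) * (\<integral>x. (g x)\<^sup>2 \<partial>M))"
    using nn[OF f2] nn[OF g2] nonneg by (simp add: ennreal_power ennreal_mult integral_nonneg_AE)
  finally have "(\<integral>x. f x * g x \<partial>M)\<^sup>2 \<le> (\<integral>x. (f x)\<^sup>2 \<partial>M) * (\<integral>x. (g x)\<^sup>2 \<partial>M)"
    by (simp add: ennreal_le_iff integral_nonneg_AE)
  then show "(\<integral>x. f x * g x \<partial>M) \<le> sqrt (\<integral>x. (f x)\<^sup>2 \<partial>M) * sqrt (\<integral>x. (g x)\<^sup>2 \<partial>M)"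
    by (metis real_le_rsqrt real_sqrt_mult)
qed

lemma
  assumes "Lp_on 4 \<Omega> f" "Lp_on 4 \<Omega> g"
  shows integrable_L4_product:
      "integrable (lebesgue_on \<Omega>) (\<lambda>x. (norm (f x))\<^sup>2 * (norm (g x))\<^sup>2)"
    and integral_L4_product_le:
      "(\<integral>x. (norm (f x))\<^sup>2 * (norm (g x))\<^sup>2 \<partial>lebesgue_on \<Omega>) \<le> (Lp_norm 4 \<Omega> f)\<^sup>2 * (Lp_norm 4 \<Omega> g)\<^sup>2"
proof -
  have [measurable]: "f \<in> borel_measurable (lebesgue_on \<Omega>)" "g \<in> borel_measurable (lebesgue_on \<Omega>)"
    using assms by (auto simp: Lp_on_4_iff)
  have sq: "((norm (h x))\<^sup>2)\<^sup>2 = (norm (h x)) ^ 4" for h :: "'a \<Rightarrow> 'b" and x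
    by (simp flip: power_mult)
  have "integrable (lebesgue_on \<Omega>) (\<lambda>x. ((norm (f x))\<^sup>2)\<^sup>2)" "integrable (lebesgue_on \<Omega>) (\<lambda>x. ((norm (g x))\<^sup>2)\<^sup>2)"
    using assms by (auto simp: Lp_on_4_iff sq)
  from Cauchy_Schwarz_integral_nonneg[OF _ _ this] show
    "integrable (lebesgue_on \<Omega>) (\<lambda>x. (norm (f x))\<^sup>2 * (norm (g x))\<^sup>2)"
    "(\<integral>x. (norm (f x))\<^sup>2 * (norm (g x))\<^sup>2 \<partial>lebesgue_on \<Omega>) \<le> (Lp_norm 4 \<Omega> f)\<^sup>2 * (Lp_norm 4 \<Omega> g)\<^sup>2"
    unfolding Lp_norm_4_sq sq by simp_all
qed

section \<open>Fields depending linearly on a finite-dimensional parameter\<close>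

lemma linearI_comb:
  assumes "\<And>a b u v. f (a *\<^sub>R u + b *\<^sub>R v) = a *\<^sub>R f u + b *\<^sub>R f v"
  shows "linear f"
proof (rule linearI)
  show "f (x + y) = f x + f y" for x y using assms[of 1 x 1 y] by simp
  show "f (c *\<^sub>R x) = c *\<^sub>R f x" for c x using assms[of c x 0 x] by simp
qed

lemma linear_family_expansion:
  fixes F :: "'w::euclidean_space \<Rightarrow> 'a \<Rightarrow> 'b::real_vector"
  assumes "linear (\<lambda>w. F w x)"
  shows "F w x = (\<Sum>b\<in>Basis. (w \<bullet> b) *\<^sub>R F b x)"
proof -
  have "F w x = (\<lambda>w. F w x) (\<Sum>b\<in>Basis. (w \<bullet> b) *\<^sub>R b)"
    by (simp add: euclidean_representation)
  also have "\<dots> = (\<Sum>b\<in>Basis. (w \<bullet> b) *\<^sub>R F b x)"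
    using linear_sum[OF assms, of "\<lambda>b. (w \<bullet> b) *\<^sub>R b" Basis] linear_scale[OF assms]
    by simp
  finally show ?thesis .
qed

lemma norm_linear_family_le:
  fixes F :: "'w::euclidean_space \<Rightarrow> 'a \<Rightarrow> 'b::real_normed_vector"
  assumes "linear (\<lambda>w. F w x)"
  shows "norm (F w x) \<le> norm w * (\<Sum>b\<in>Basis. norm (F b x))"
proof -
  have "norm (F w x) \<le> (\<Sum>b\<in>Basis. norm ((w \<bullet> b) *\<^sub>R F b x))"
    by (subst linear_family_expansion[of F x w, OF assms]) (rule norm_sum)
  also have "\<dots> \<le> (\<Sum>b\<in>Basis. norm w * norm (F b x))"
    by (rule sum_mono) (simp add: Basis_le_norm mult_right_mono)
  finally show ?thesis by (simp add: sum_distrib_left)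
qed

lemma norm_linear_family_powr_le:
  fixes F :: "'w::euclidean_space \<Rightarrow> 'a \<Rightarrow> 'b::real_normed_vector"
  assumes p: "0 < p" and lin: "linear (\<lambda>w. F w x)"
  shows "norm (F w x) powr p \<le> (DIM('w) * norm w) powr p * (\<Sum>b\<in>Basis. norm (F b x) powr p)"
proof -
  define S where "S = (\<Sum>b\<in>Basis. norm (F b x) powr p)"
  have S0: "0 \<le> S" unfolding S_def by (simp add: sum_nonneg)
  have "norm (F b x) \<le> S powr (1/p)" if "b \<in> Basis" for b
  proof -
    have "norm (F b x) powr p \<le> S"
      unfolding S_def using that by (intro member_le_sum) auto
    then have "(norm (F b x) powr p) powr (1/p) \<le> S powr (1/p)"
      using p by (intro powr_mono2) auto
    then show ?thesis using p by (simp add: powr_powr)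
  qed
  then have "(\<Sum>b\<in>Basis. norm (F b x)) \<le> DIM('w) * S powr (1/p)"
    using sum_bounded_above[of Basis "\<lambda>b. norm (F b x)"] by simp
  then have "norm (F w x) \<le> norm w * (DIM('w) * S powr (1/p))"
    using norm_linear_family_le[of F x w, OF lin] by (meson mult_left_mono norm_ge_zero order_trans)
  then have "norm (F w x) powr p \<le> (DIM('w) * norm w * S powr (1/p)) powr p"
    using p by (intro powr_mono2) (auto simp: mult_ac)
  also have "\<dots> = (DIM('w) * norm w) powr p * S"
    using p S0 by (simp add: powr_mult powr_powr)
  finally show ?thesis unfolding S_def .
qed

lemma Lp_norm_linear_family_le:
  fixes F :: "'w::euclidean_space \<Rightarrow> 'a::euclidean_space \<Rightarrow> 'b::real_normed_vector"
  assumes p: "0 < p" and Lp: "\<And>w. Lp_on p \<Omega> (F w)" and lin: "\<And>x. linear (\<lambda>w. F w x)"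
  shows "\<exists>K. \<forall>w. Lp_norm p \<Omega> (F w) \<le> K * norm w"
proof -
  define M where "M = lebesgue_on \<Omega>"
  define I where "I = (\<integral>x. (\<Sum>b\<in>Basis. norm (F b x) powr p) \<partial>M)"
  have int: "integrable M (\<lambda>x. norm (F w x) powr p)" for w
    using Lp unfolding Lp_on_def M_def by blast
  have I0: "0 \<le> I" unfolding I_def by (simp add: integral_nonneg_AE sum_nonneg)
  have "(\<integral>x. norm (F w x) powr p \<partial>M) \<le> (\<integral>x. (DIM('w) * norm w) powr p * (\<Sum>b\<in>Basis. norm (F b x) powr p) \<partial>M)" for w
    using int norm_linear_family_powr_le[OF p lin]
    by (intro integral_mono integrable_mult_right Bochner_Integration.integrable_sum) auto
  then have "Lp_norm p \<Omega> (F w) \<le> ((DIM('w) * norm w) powr p * I) powr (1/p)" for w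
    unfolding Lp_norm_def M_def I_def
    by (intro powr_mono2) (use p in \<open>auto simp: integral_nonneg_AE\<close>)
  also have "((DIM('w) * norm w) powr p * I) powr (1/p) = I powr (1/p) * DIM('w) * norm w" for w
    using p I0 by (simp add: powr_mult powr_powr mult_ac)
  finally show ?thesis by (metis mult.assoc)
qed

lemma continuous_pos_homogeneous_bounded_below:
  fixes N :: "'w::euclidean_space \<Rightarrow> real"
  assumes cont: "continuous_on UNIV N"
    and hom: "\<And>c w. N (c *\<^sub>R w) = \<bar>c\<bar> * N w"
    and pos: "\<And>w. w \<noteq> 0 \<Longrightarrow> 0 < N w"
  shows "\<exists>c>0. \<forall>w. c * norm w \<le> N w"
proof -
  obtain b :: 'w where "b \<in> Basis" using nonempty_Basis by blast
  then have "sphere (0::'w) 1 \<noteq> {}" by (metis norm_Basis mem_sphere_0 empty_iff)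
  then obtain w0 where w0: "w0 \<in> sphere (0::'w) 1" "\<forall>w\<in>sphere 0 1. N w0 \<le> N w"
    using continuous_attains_inf[OF compact_sphere _ continuous_on_subset[OF cont]] by blast
  have "N w0 * norm w \<le> N w" for w
  proof (cases "w = 0")
    case False
    have "N w0 \<le> N (inverse (norm w) *\<^sub>R w)" using w0 False by simp
    also have "\<dots> = N w / norm w" using hom by (simp add: divide_inverse_commute)
    finally show ?thesis using False by (simp add: pos_le_divide_eq)
  qed (use hom[of 0 w] in simp)
  moreover have "0 < N w0" by (rule pos) (use w0(1) in auto)
  ultimately show ?thesis by blast
qed

text \<open>The squared norm is a quadratic form in the coordinates of \<open>w\<close>, hence continuous.\<close>

lemma continuous_on_Lp_norm_2_linear_family:
  fixes F :: "'w::euclidean_space \<Rightarrow> 'a::euclidean_space \<Rightarrow> 'b::euclidean_space"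
  assumes L2: "\<And>w. Lp_on 2 \<Omega> (F w)" and lin: "\<And>x. linear (\<lambda>w. F w x)"
  shows "continuous_on UNIV (\<lambda>w. Lp_norm 2 \<Omega> (F w))"
proof -
  define K where "K b c = (\<integral>x. F b x \<bullet> F c x \<partial>lebesgue_on \<Omega>)" for b c
  have "(norm (F w x))\<^sup>2 = (\<Sum>b\<in>Basis. \<Sum>c\<in>Basis. (w \<bullet> b) * (w \<bullet> c) * (F b x \<bullet> F c x))" for w x
    unfolding power2_norm_eq_inner
    by (subst (1 2) linear_family_expansion[of F x w, OF lin], unfold inner_sum_left)
      (simp add: inner_sum_right sum_distrib_left mult_ac)
  then have "(Lp_norm 2 \<Omega> (F w))\<^sup>2 = (\<Sum>b\<in>Basis. \<Sum>c\<in>Basis. (w \<bullet> b) * (w \<bullet> c) * K b c)" for w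
    unfolding Lp_norm_2_sq K_def using L2_inner_integrable[OF L2 L2]
    by (simp add: integrable_sum)
  then have "Lp_norm 2 \<Omega> (F w) = sqrt (\<Sum>b\<in>Basis. \<Sum>c\<in>Basis. (w \<bullet> b) * (w \<bullet> c) * K b c)" for w
    by (metis Lp_norm_nonneg real_sqrt_unique)
  then show ?thesis
    by (simp only:) (intro continuous_intros)
qed

lemma Lp_norm_2_linear_family_ge:
  fixes F :: "'w::euclidean_space \<Rightarrow> 'a::euclidean_space \<Rightarrow> 'b::euclidean_space"
  assumes L2: "\<And>w. Lp_on 2 \<Omega> (F w)" and lin: "\<And>x. linear (\<lambda>w. F w x)"
    and definite: "\<And>w. Lp_norm 2 \<Omega> (F w) = 0 \<Longrightarrow> w = 0"
  shows "\<exists>c>0. \<forall>w. c * norm w \<le> Lp_norm 2 \<Omega> (F w)"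
proof (rule continuous_pos_homogeneous_bounded_below)
  show "continuous_on UNIV (\<lambda>w. Lp_norm 2 \<Omega> (F w))"
    using L2 lin by (rule continuous_on_Lp_norm_2_linear_family)
  show "Lp_norm 2 \<Omega> (F (c *\<^sub>R w)) = \<bar>c\<bar> * Lp_norm 2 \<Omega> (F w)" for c w
  proof -
    have "F (c *\<^sub>R w) = (\<lambda>x. c *\<^sub>R F w x)"
      using linear_scale[OF lin] by blast
    then show ?thesis by (simp add: Lp_norm_scaleR)
  qed
  show "w \<noteq> 0 \<Longrightarrow> 0 < Lp_norm 2 \<Omega> (F w)" for w
    using definite[of w] Lp_norm_nonneg[of 2 \<Omega> "F w"] by (auto simp: order_less_le)
qed

lemma borel_measurable_vec_lambda:
  fixes f :: "'k::finite \<Rightarrow> 'a \<Rightarrow> 'b::euclidean_space"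
  assumes "\<And>i. f i \<in> borel_measurable M"
  shows "(\<lambda>x. \<chi> i. f i x) \<in> borel_measurable M"
proof (subst borel_measurable_euclidean_space, intro ballI)
  fix b :: "'b^'k" assume "b \<in> Basis"
  then obtain j u where b: "b = axis j u" "u \<in> Basis" unfolding Basis_vec_def by auto
  have "(\<lambda>x. (\<chi> i. f i x) \<bullet> b) = (\<lambda>x. f j x \<bullet> u)" unfolding b by (simp add: inner_axis)
  also have "\<dots> \<in> borel_measurable M" using assms by (intro borel_measurable_inner) auto
  finally show "(\<lambda>x. (\<chi> i. f i x) \<bullet> b) \<in> borel_measurable M" .
qed

lemma norm_compw: "norm (compw F \<Psi> x) = L2_set (\<lambda>i. norm (F (\<Psi> $ i) x)) UNIV"
  unfolding compw_def norm_vec_def by simp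

lemma power2_norm_compw: "(norm (compw F \<Psi> x))\<^sup>2 = (\<Sum>i\<in>UNIV. (norm (F (\<Psi> $ i) x))\<^sup>2)"
  unfolding norm_compw L2_set_def by (simp add: sum_nonneg)

lemma power4_norm_compw:
  "(norm (compw F \<Psi> x)) ^ 4 = (\<Sum>i\<in>UNIV. \<Sum>j\<in>UNIV. (norm (F (\<Psi> $ i) x))\<^sup>2 * (norm (F (\<Psi> $ j) x))\<^sup>2)"
proof -
  have "(norm (compw F \<Psi> x)) ^ 4 = ((norm (compw F \<Psi> x))\<^sup>2)\<^sup>2" by (simp flip: power_mult)
  then show ?thesis unfolding power2_norm_compw by (simp add: power2_eq_square sum_product)
qed

lemma compw_borel_measurable:
  fixes F :: "'x \<Rightarrow> 'a \<Rightarrow> 'b::euclidean_space"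
  assumes "\<And>w. F w \<in> borel_measurable M"
  shows "compw F (\<Psi> :: 'x^'k::finite) \<in> borel_measurable M"
  unfolding compw_def using assms by (intro borel_measurable_vec_lambda)

lemma compw_comb:
  assumes "\<And>x. linear (\<lambda>w. F w x)"
  shows "compw F (a *\<^sub>R \<Psi> + b *\<^sub>R \<Phi>) = lincomb a (compw F \<Psi>) b (compw F \<Phi>)"
  using linear_add[OF assms] linear_scale[OF assms]
  by (simp add: compw_def lincomb_def fun_eq_iff vec_eq_iff)

lemma
  fixes F :: "'x \<Rightarrow> 'a::euclidean_space \<Rightarrow> 'b::euclidean_space" and \<Psi> :: "'x^'k::finite"
  assumes L2: "\<And>w. Lp_on 2 \<Omega> (F w)"
  shows Lp_on_2_compw: "Lp_on 2 \<Omega> (compw F \<Psi>)"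
    and Lp_norm_2_compw: "Lp_norm 2 \<Omega> (compw F \<Psi>) = L2_set (\<lambda>i. Lp_norm 2 \<Omega> (F (\<Psi> $ i))) UNIV"
proof -
  have int: "integrable (lebesgue_on \<Omega>) (\<lambda>x. (norm (F w x))\<^sup>2)" for w
    using L2 by (simp add: Lp_on_2_iff)
  show "Lp_on 2 \<Omega> (compw F \<Psi>)"
    unfolding Lp_on_2_iff power2_norm_compw
  proof
    show "compw F \<Psi> \<in> borel_measurable (lebesgue_on \<Omega>)"
      using L2 by (intro compw_borel_measurable) (simp add: Lp_on_2_iff)
    show "integrable (lebesgue_on \<Omega>) (\<lambda>x. \<Sum>i\<in>UNIV. (norm (F (\<Psi> $ i) x))\<^sup>2)"
      using int by (intro Bochner_Integration.integrable_sum) auto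
  qed
  have "(\<integral>x. (norm (compw F \<Psi> x))\<^sup>2 \<partial>lebesgue_on \<Omega>) = (\<Sum>i\<in>UNIV. (Lp_norm 2 \<Omega> (F (\<Psi> $ i)))\<^sup>2)"
    unfolding power2_norm_compw Lp_norm_2_sq using int by (simp add: integral_sum)
  then show "Lp_norm 2 \<Omega> (compw F \<Psi>) = L2_set (\<lambda>i. Lp_norm 2 \<Omega> (F (\<Psi> $ i))) UNIV"
    by (simp only: Lp_norm_2_eq[of \<Omega> "compw F \<Psi>"] L2_set_def)
qed

lemma
  fixes F :: "'x \<Rightarrow> 'a::euclidean_space \<Rightarrow> 'b::euclidean_space" and \<Psi> :: "'x^'k::finite"
  assumes L4: "\<And>w. Lp_on 4 \<Omega> (F w)"
  shows Lp_on_4_compw: "Lp_on 4 \<Omega> (compw F \<Psi>)"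
    and Lp_norm_4_compw_le:
      "Lp_norm 4 \<Omega> (compw F \<Psi>) \<le> L2_set (\<lambda>i. Lp_norm 4 \<Omega> (F (\<Psi> $ i))) UNIV"
proof -
  show "Lp_on 4 \<Omega> (compw F \<Psi>)"
    unfolding Lp_on_4_iff power4_norm_compw
    using L4 integrable_L4_product[OF L4 L4]
    by (auto simp: Lp_on_4_iff intro!: compw_borel_measurable Bochner_Integration.integrable_sum)
  define N where "N = L2_set (\<lambda>i. Lp_norm 4 \<Omega> (F (\<Psi> $ i))) UNIV"
  have "(\<integral>x. (norm (compw F \<Psi> x)) ^ 4 \<partial>lebesgue_on \<Omega>)
      \<le> (\<Sum>i\<in>UNIV. \<Sum>j\<in>UNIV. (Lp_norm 4 \<Omega> (F (\<Psi> $ i)))\<^sup>2 * (Lp_norm 4 \<Omega> (F (\<Psi> $ j)))\<^sup>2)"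
    unfolding power4_norm_compw using integrable_L4_product[OF L4 L4]
    by (simp add: Bochner_Integration.integrable_sum integral_L4_product_le[OF L4 L4] sum_mono)
  also have "\<dots> = (N\<^sup>2)\<^sup>2"
    unfolding N_def L2_set_def by (simp add: sum_nonneg power2_eq_square sum_product)
  finally show "Lp_norm 4 \<Omega> (compw F \<Psi>) \<le> N"
    by (intro Lp_norm_4_le) (auto simp: N_def L2_set_nonneg simp flip: power_mult)
qed

lemma bdd_above_ratio_image:
  fixes f g :: "'a \<Rightarrow> real"
  assumes "\<And>u. u \<in> S \<Longrightarrow> f u \<le> M * g u" "\<And>u. u \<in> S \<Longrightarrow> 0 \<le> g u"
  shows "bdd_above ((\<lambda>u. f u / g u) ` S)"
proof (rule bdd_aboveI2)
  fix u assume "u \<in> S"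
  then have "f u \<le> max M 0 * g u" "0 \<le> g u"
    using assms mult_right_mono[of M "max M 0" "g u"] by force+
  then show "f u / g u \<le> max M 0"
    by (cases "g u = 0") (auto simp: divide_le_eq)
qed

lemma le_SUP_ratio_mult:
  fixes f g :: "'a \<Rightarrow> real"
  assumes "bdd_above ((\<lambda>u. f u / g u) ` S)" "u \<in> S" "0 < g u"
  shows "f u \<le> (SUP u\<in>S. f u / g u) * g u"
  using cSUP_upper[OF assms(2,1)] assms(3) by (simp add: divide_le_eq)

lemma SUP_ratio_nonneg:
  fixes f g :: "'a \<Rightarrow> real"
  assumes "bdd_above ((\<lambda>u. f u / g u) ` S)" "u \<in> S" "0 \<le> f u" "0 \<le> g u"
  shows "0 \<le> (SUP u\<in>S. f u / g u)"
  using cSUP_upper[OF assms(2,1)] assms(3,4) by (meson divide_nonneg_nonneg order_trans)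

lemma trilinear_norm_ratio:
  "trilinear_norm \<Omega> B = (SUP t\<in>{(u, v, w). Lp_on 2 \<Omega> u \<and> Lp_on 4 \<Omega> v \<and> Lp_on 4 \<Omega> w}.
     \<bar>B (fst t) (fst (snd t)) (snd (snd t))\<bar> /
     (Lp_norm 2 \<Omega> (fst t) * Lp_norm 4 \<Omega> (fst (snd t)) * Lp_norm 4 \<Omega> (snd (snd t))))"
  unfolding trilinear_norm_def by (simp add: split_beta)

lemma
  assumes "cont_trilinear_on \<Omega> B"
  shows trilinear_norm_nonneg: "0 \<le> trilinear_norm \<Omega> B"
    and abs_le_trilinear_norm: "Lp_on 2 \<Omega> u \<Longrightarrow> Lp_on 4 \<Omega> v \<Longrightarrow> Lp_on 4 \<Omega> w \<Longrightarrow>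
      \<bar>B u v w\<bar> \<le> trilinear_norm \<Omega> B * Lp_norm 2 \<Omega> u * Lp_norm 4 \<Omega> v * Lp_norm 4 \<Omega> w"
proof -
  obtain M where M: "\<And>u v w. Lp_on 2 \<Omega> u \<Longrightarrow> Lp_on 4 \<Omega> v \<Longrightarrow> Lp_on 4 \<Omega> w \<Longrightarrow>
      \<bar>B u v w\<bar> \<le> M * (Lp_norm 2 \<Omega> u * Lp_norm 4 \<Omega> v * Lp_norm 4 \<Omega> w)"
    using assms unfolding cont_trilinear_on_def by (metis mult.assoc)
  have bdd: "bdd_above ((\<lambda>t. \<bar>B (fst t) (fst (snd t)) (snd (snd t))\<bar> /
     (Lp_norm 2 \<Omega> (fst t) * Lp_norm 4 \<Omega> (fst (snd t)) * Lp_norm 4 \<Omega> (snd (snd t))))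
       ` {(u, v, w). Lp_on 2 \<Omega> u \<and> Lp_on 4 \<Omega> v \<and> Lp_on 4 \<Omega> w})"
    by (rule bdd_above_ratio_image) (auto intro: M simp: Lp_norm_nonneg)
  show "0 \<le> trilinear_norm \<Omega> B"
    unfolding trilinear_norm_ratio
    by (rule SUP_ratio_nonneg[OF bdd, of "(\<lambda>x. 0, \<lambda>x. 0, \<lambda>x. 0)"])
      (auto simp: Lp_on_zero Lp_norm_nonneg)
  assume uvw: "Lp_on 2 \<Omega> u" "Lp_on 4 \<Omega> v" "Lp_on 4 \<Omega> w"
  show "\<bar>B u v w\<bar> \<le> trilinear_norm \<Omega> B * Lp_norm 2 \<Omega> u * Lp_norm 4 \<Omega> v * Lp_norm 4 \<Omega> w"
  proof (cases "Lp_norm 2 \<Omega> u * Lp_norm 4 \<Omega> v * Lp_norm 4 \<Omega> w = 0")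
    case True
    then show ?thesis using M[OF uvw] by (metis mult.assoc mult_zero_right)
  next
    case False
    then have "0 < Lp_norm 2 \<Omega> u * Lp_norm 4 \<Omega> v * Lp_norm 4 \<Omega> w"
      by (simp add: Lp_norm_nonneg less_le)
    with le_SUP_ratio_mult[OF bdd, of "(u, v, w)"] uvw show ?thesis
      unfolding trilinear_norm_ratio by (simp add: mult.assoc)
  qed
qed

lemma cont_linear_functional_zero:
  fixes L :: "('k::finite \<Rightarrow> real^'n::finite \<Rightarrow> real) \<Rightarrow> real"
    and u :: "'k \<Rightarrow> real^'n \<Rightarrow> real"
  assumes "cont_linear_functional \<Omega> L" "H20k \<Omega> u"
  shows "L (\<lambda>i x. 0) = 0"
proof -
  have "L (\<lambda>i. lincomb 0 (u i) 0 (u i)) = 0 * L u + 0 * L u"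
    using assms unfolding cont_linear_functional_def by blast
  then show ?thesis by (simp add: lincomb_def)
qed

lemma H2k_norm_nonneg: "0 \<le> H2k_norm \<Omega> u"
  unfolding H2k_norm_def by (simp add: sum_nonneg)

lemma H2_norm_nonneg: "0 \<le> H2_norm \<Omega> \<phi>"
  unfolding H2_norm_def by simp

lemma H2k_norm_eq: "H2k_norm \<Omega> u = L2_set (\<lambda>i. H2_norm \<Omega> (u i)) UNIV"
  unfolding H2k_norm_def L2_set_def ..

lemma dual_norm_nonneg:
  fixes L :: "('k::finite \<Rightarrow> real^'n::finite \<Rightarrow> real) \<Rightarrow> real"
    and u :: "'k \<Rightarrow> real^'n \<Rightarrow> real"
  assumes "cont_linear_functional \<Omega> L" "H20k \<Omega> u" "u \<noteq> (\<lambda>i x. 0)"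
  shows "0 \<le> dual_norm \<Omega> L"
proof -
  obtain M where "\<And>u. H20k \<Omega> u \<Longrightarrow> \<bar>L u\<bar> \<le> M * H2k_norm \<Omega> u"
    using assms(1) unfolding cont_linear_functional_def by blast
  then have "bdd_above ((\<lambda>u. \<bar>L u\<bar> / H2k_norm \<Omega> u) ` {u. H20k \<Omega> u \<and> u \<noteq> (\<lambda>i x. 0)})"
    by (intro bdd_above_ratio_image) (auto simp: H2k_norm_nonneg)
  then show ?thesis
    unfolding dual_norm_def
    by (rule SUP_ratio_nonneg[of _ _ _ u]) (use assms(2,3) in \<open>auto simp: H2k_norm_nonneg\<close>)
qed

lemma abs_le_dual_norm:
  fixes L :: "('k::finite \<Rightarrow> real^'n::finite \<Rightarrow> real) \<Rightarrow> real"
  assumes L: "cont_linear_functional \<Omega> L" and u: "H20k \<Omega> u" and D: "0 \<le> dual_norm \<Omega> L"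
  shows "\<bar>L u\<bar> \<le> dual_norm \<Omega> L * H2k_norm \<Omega> u"
proof -
  obtain M where M: "\<And>u. H20k \<Omega> u \<Longrightarrow> \<bar>L u\<bar> \<le> M * H2k_norm \<Omega> u"
    using L unfolding cont_linear_functional_def by blast
  then have bdd: "bdd_above ((\<lambda>u. \<bar>L u\<bar> / H2k_norm \<Omega> u) ` {u. H20k \<Omega> u \<and> u \<noteq> (\<lambda>i x. 0)})"
    by (intro bdd_above_ratio_image) (auto simp: H2k_norm_nonneg)
  consider "u = (\<lambda>i x. 0)" | "H2k_norm \<Omega> u = 0" | "u \<noteq> (\<lambda>i x. 0)" "0 < H2k_norm \<Omega> u"
    using H2k_norm_nonneg[of \<Omega> u] by fastforce
  then show ?thesis
  proof cases
    case 1
    then show ?thesis using cont_linear_functional_zero[OF L u] D by (simp add: H2k_norm_nonneg)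
  next
    case 2
    then show ?thesis using M[OF u] by simp
  next
    case 3
    then show ?thesis
      using le_SUP_ratio_mult[OF bdd, of u] u unfolding dual_norm_def by simp
  qed
qed

lemma disc_norm_nonneg: "0 \<le> disc_norm \<Omega> Hd w"
  unfolding disc_norm_def by (rule Lp_norm_nonneg)

lemma disc_norm_pos:
  assumes "hessian_discretisation \<Omega> Pd Gd Hd" "w \<noteq> 0"
  shows "0 < disc_norm \<Omega> Hd w"
  using assms disc_norm_nonneg[of \<Omega> Hd w] unfolding hessian_discretisation_def
  by (auto simp: less_le)

lemma disc_norm_ge:
  assumes "hessian_discretisation \<Omega> Pd Gd Hd"
  shows "\<exists>c>0. \<forall>w. c * norm w \<le> disc_norm \<Omega> Hd w"
  using assms unfolding hessian_discretisation_def disc_norm_def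
  by (intro Lp_norm_2_linear_family_ge) auto

lemma C_disc_eq:
  "C_disc \<Omega> Pd Gd Hd =
     (SUP w\<in>UNIV - {0}. max (Lp_norm 2 \<Omega> (Pd w)) (Lp_norm 4 \<Omega> (Gd w)) / disc_norm \<Omega> Hd w)"
  unfolding C_disc_def by (simp add: max_divide_distrib_right disc_norm_nonneg)

lemma bdd_above_C_disc:
  fixes Pd :: "'x::euclidean_space \<Rightarrow> real^'n::finite \<Rightarrow> real"
  assumes HD: "hessian_discretisation \<Omega> Pd Gd Hd"
  shows "bdd_above ((\<lambda>w. max (Lp_norm 2 \<Omega> (Pd w)) (Lp_norm 4 \<Omega> (Gd w)) / disc_norm \<Omega> Hd w)
    ` (UNIV - {0}))"
proof -
  obtain c where c: "c > 0" "\<And>w. c * norm w \<le> disc_norm \<Omega> Hd w"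
    using disc_norm_ge[OF HD] by blast
  obtain K2 where K2: "\<And>w. Lp_norm 2 \<Omega> (Pd w) \<le> K2 * norm w"
    using HD Lp_norm_linear_family_le[of 2 \<Omega> Pd] unfolding hessian_discretisation_def by auto
  obtain K4 where K4: "\<And>w. Lp_norm 4 \<Omega> (Gd w) \<le> K4 * norm w"
    using HD Lp_norm_linear_family_le[of 4 \<Omega> Gd] unfolding hessian_discretisation_def by auto
  define K where "K = max (max K2 K4) 0"
  have "max (Lp_norm 2 \<Omega> (Pd w)) (Lp_norm 4 \<Omega> (Gd w)) \<le> K / c * disc_norm \<Omega> Hd w" for w
  proof -
    have "K2 * norm w \<le> K * norm w" "K4 * norm w \<le> K * norm w"
      unfolding K_def by (simp_all add: mult_right_mono)
    then have "max (Lp_norm 2 \<Omega> (Pd w)) (Lp_norm 4 \<Omega> (Gd w)) \<le> K * norm w"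
      using K2[of w] K4[of w] by simp
    also have "\<dots> \<le> K * (disc_norm \<Omega> Hd w / c)"
      using c by (intro mult_left_mono) (auto simp: K_def field_simps)
    finally show ?thesis by simp
  qed
  then show ?thesis
    by (intro bdd_above_ratio_image[where M = "K / c"]) (auto simp: disc_norm_nonneg)
qed

lemma C_disc_nonneg:
  fixes Pd :: "'x::euclidean_space \<Rightarrow> real^'n::finite \<Rightarrow> real"
  assumes "hessian_discretisation \<Omega> Pd Gd Hd"
  shows "0 \<le> C_disc \<Omega> Pd Gd Hd"
proof -
  obtain b :: 'x where "b \<in> Basis" by (meson nonempty_Basis ex_in_conv)
  then have "b \<in> UNIV - {0}" by auto
  from SUP_ratio_nonneg[OF bdd_above_C_disc[OF assms] this] show ?thesis
    unfolding C_disc_eq by (simp add: disc_norm_nonneg Lp_norm_nonneg le_max_iff_disj)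
qed

lemma Lp_norm_4_le_C_disc:
  fixes Pd :: "'x::euclidean_space \<Rightarrow> real^'n::finite \<Rightarrow> real"
  assumes HD: "hessian_discretisation \<Omega> Pd Gd Hd"
  shows "Lp_norm 4 \<Omega> (Gd w) \<le> C_disc \<Omega> Pd Gd Hd * disc_norm \<Omega> Hd w"
proof (cases "w = 0")
  case True
  have "Gd 0 x = 0" for x
    using HD linear_0[of "\<lambda>w. Gd w x"] unfolding hessian_discretisation_def by simp
  with True have "Gd w = (\<lambda>x. 0)" by auto
  then show ?thesis using C_disc_nonneg[OF HD] by (simp add: Lp_norm_zero disc_norm_nonneg)
next
  case False
  then have "max (Lp_norm 2 \<Omega> (Pd w)) (Lp_norm 4 \<Omega> (Gd w)) \<le> C_disc \<Omega> Pd Gd Hd * disc_norm \<Omega> Hd w"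
    unfolding C_disc_eq
    by (intro le_SUP_ratio_mult[OF bdd_above_C_disc[OF HD]]) (auto intro: disc_norm_pos[OF HD])
  then show ?thesis by simp
qed

lemma Gamma_E_nonneg:
  fixes Ed :: "'x::euclidean_space \<Rightarrow> real^'n::finite \<Rightarrow> real"
  assumes "Gamma_finite \<Omega> Hd Ed"
  shows "0 \<le> Gamma_E \<Omega> Hd Ed"
proof -
  obtain b :: 'x where "b \<in> Basis" by (meson nonempty_Basis ex_in_conv)
  then have "b \<in> UNIV - {0}" by auto
  from SUP_ratio_nonneg[OF assms[unfolded Gamma_finite_def] this] show ?thesis
    unfolding Gamma_E_def by (simp add: disc_norm_nonneg Lp_norm_nonneg)
qed

lemma Lp_norm_whess_le_Gamma_E:
  assumes "hessian_discretisation \<Omega> Pd Gd Hd" "Gamma_finite \<Omega> Hd Ed" "\<psi> \<noteq> 0"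
  shows "Lp_norm 2 \<Omega> (whess \<Omega> (Ed \<psi>)) \<le> Gamma_E \<Omega> Hd Ed * disc_norm \<Omega> Hd \<psi>"
  using assms(2,3) disc_norm_pos[OF assms(1,3)] unfolding Gamma_E_def Gamma_finite_def
  by (intro le_SUP_ratio_mult) auto

text \<open>If \<open>P\<close> points outward on the sphere of radius \<open>R\<close>, a zero-free \<open>P\<close> would make
  \<open>x \<mapsto> -R P x / |P x|\<close> a self-map of the ball without fixed point, contradicting Brouwer.\<close>

lemma outward_field_has_zero:
  fixes P :: "'a::euclidean_space \<Rightarrow> 'a"
  assumes R: "0 < R" and cont: "continuous_on (cball 0 R) P"
    and outward: "\<And>x. norm x = R \<Longrightarrow> 0 < P x \<bullet> x"
  shows "\<exists>x. P x = 0"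
proof (rule ccontr)
  assume "\<nexists>x. P x = 0"
  then have nz: "P x \<noteq> 0" for x by blast
  define f where "f x = - (R / norm (P x)) *\<^sub>R P x" for x
  have norm_f: "norm (f x) = R" for x
    unfolding f_def using nz R by simp
  have "continuous_on (cball 0 R) f"
    unfolding f_def using cont nz by (intro continuous_intros) auto
  moreover have "f \<in> cball 0 R \<rightarrow> cball 0 R" using norm_f by auto
  ultimately obtain x where x: "f x = x" using brouwer_ball[OF R] by metis
  then have "0 < P x \<bullet> x" using norm_f outward by metis
  moreover have "P x \<bullet> x = - (R / norm (P x)) * (P x \<bullet> P x)"
    using x unfolding f_def by (metis inner_scaleR_right)
  moreover have "0 < R / norm (P x) * (P x \<bullet> P x)" using nz R by simp
  ultimately show False by linarith
qed

lemma coercive_form_has_root: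
  fixes F :: "'v::euclidean_space \<Rightarrow> 'v \<Rightarrow> real"
  assumes lin: "\<And>v. linear (F v)"
    and cont: "\<And>w. continuous_on UNIV (\<lambda>v. F v w)"
    and a: "0 < a" and coercive: "\<And>v. a * (norm v)\<^sup>2 - K * norm v \<le> F v v"
  shows "\<exists>v. \<forall>w. F v w = 0"
proof -
  define P where "P v = (\<Sum>e\<in>Basis. F v e *\<^sub>R e)" for v
  have P_inner: "P v \<bullet> w = F v w" for v w
  proof -
    have "P v \<bullet> w = (\<Sum>e\<in>Basis. (w \<bullet> e) * F v e)"
      unfolding P_def inner_sum_left by (rule sum.cong) (simp_all add: inner_commute)
    also have "\<dots> = F v w"
      using linear_family_expansion[of "\<lambda>w _. F v w" undefined w] lin by simp
    finally show ?thesis .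
  qed
  have "continuous_on UNIV P"
    unfolding P_def by (intro continuous_intros cont)
  define R where "R = max K 0 / a + 1"
  have "0 \<le> max K 0 / a" using a by simp
  then have R: "0 < R" unfolding R_def by linarith
  have "0 < P v \<bullet> v" if "norm v = R" for v
  proof -
    have "a * R = max K 0 + a" unfolding R_def using a by (simp add: distrib_left)
    then have "K < a * R" using a by linarith
    then have "0 < a * R\<^sup>2 - K * R" using R by (simp add: power2_eq_square algebra_simps)
    then show ?thesis using coercive[of v] that P_inner by simp
  qed
  with outward_field_has_zero[OF R continuous_on_subset[OF \<open>continuous_on UNIV P\<close>]]
  obtain v where "P v = 0" by blast
  then show ?thesis using P_inner by (metis inner_zero_left)
qed

text \<open>Perturbing the zero components of \<open>\<Psi>\<close> by \<open>\<epsilon> e\<close> makes them nonzero while changing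
  every relevant quantity by \<open>O(\<epsilon>)\<close>.\<close>

lemma bound_extends_to_zero_components:
  fixes \<phi> :: "'x::euclidean_space^'k::finite \<Rightarrow> real" and N :: "'x \<Rightarrow> real"
  assumes lin: "linear \<phi>" and hom: "\<And>c w. N (c *\<^sub>R w) = \<bar>c\<bar> * N w" and M: "0 \<le> M"
    and bound: "\<And>\<Phi>. (\<forall>i. \<Phi> $ i \<noteq> 0) \<Longrightarrow> \<bar>\<phi> \<Phi>\<bar> \<le> M * L2_set (\<lambda>i. N (\<Phi> $ i)) UNIV"
  shows "\<bar>\<phi> \<Psi>\<bar> \<le> M * L2_set (\<lambda>i. N (\<Psi> $ i)) UNIV"
proof (rule field_le_epsilon)
  obtain e :: 'x where "e \<in> Basis" by (meson nonempty_Basis ex_in_conv)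
  then have "e \<noteq> 0" by auto
  define v :: "'x^'k" where "v = (\<chi> i. if \<Psi> $ i = 0 then e else 0)"
  define z where "z i = (if \<Psi> $ i = 0 then N e else 0)" for i
  define W where "W = M * L2_set z UNIV + \<bar>\<phi> v\<bar>"
  have W: "0 \<le> W" unfolding W_def using M by (simp add: L2_set_nonneg)
  have perturbed: "\<bar>\<phi> \<Psi>\<bar> \<le> M * L2_set (\<lambda>i. N (\<Psi> $ i)) UNIV + \<epsilon> * W" if "0 < \<epsilon>" for \<epsilon>
  proof -
    have N0: "N 0 = 0" using hom[of 0 0] by simp
    have comp: "(\<Psi> + \<epsilon> *\<^sub>R v) $ i \<noteq> 0 \<and> N ((\<Psi> + \<epsilon> *\<^sub>R v) $ i) = N (\<Psi> $ i) + \<epsilon> * z i" for i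
      using \<open>e \<noteq> 0\<close> \<open>0 < \<epsilon>\<close> hom[of \<epsilon> e] N0 by (simp add: v_def z_def)
    have "\<bar>\<phi> \<Psi>\<bar> \<le> \<bar>\<phi> (\<Psi> + \<epsilon> *\<^sub>R v)\<bar> + \<epsilon> * \<bar>\<phi> v\<bar>"
      using abs_triangle_ineq4[of "\<phi> \<Psi> + \<epsilon> * \<phi> v" "\<epsilon> * \<phi> v"] \<open>0 < \<epsilon>\<close>
      by (simp add: linear_add[OF lin] linear_scale[OF lin] abs_mult)
    also have "\<bar>\<phi> (\<Psi> + \<epsilon> *\<^sub>R v)\<bar> \<le> M * L2_set (\<lambda>i. N (\<Psi> $ i) + \<epsilon> * z i) UNIV"
      using bound[of "\<Psi> + \<epsilon> *\<^sub>R v"] comp by simp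
    also have "\<dots> \<le> M * (L2_set (\<lambda>i. N (\<Psi> $ i)) UNIV + \<epsilon> * L2_set z UNIV)"
      using M \<open>0 < \<epsilon>\<close> L2_set_triangle_ineq[of "\<lambda>i. N (\<Psi> $ i)" "\<lambda>i. \<epsilon> * z i" UNIV]
      by (intro mult_left_mono) (auto simp: L2_set_right_distrib)
    finally show ?thesis unfolding W_def by (simp add: algebra_simps)
  qed
  fix d :: real assume "0 < d"
  then have "0 < d / (W + 1)" using W by simp
  from perturbed[OF this] have "\<bar>\<phi> \<Psi>\<bar> \<le> M * L2_set (\<lambda>i. N (\<Psi> $ i)) UNIV + d * (W / (W + 1))"
    by simp
  also have "\<dots> \<le> M * L2_set (\<lambda>i. N (\<Psi> $ i)) UNIV + d"
    using W \<open>0 < d\<close> by (intro add_left_mono mult_left_le) auto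
  finally show "\<bar>\<phi> \<Psi>\<bar> \<le> M * L2_set (\<lambda>i. N (\<Psi> $ i)) UNIV + d" .
qed

section \<open>The Hessian scheme\<close>

locale hessian_scheme =
  fixes \<Omega> :: "(real^'n::finite) set"
    and A :: "(real^'n \<Rightarrow> (real^'n^'n)^'k::finite) \<Rightarrow> (real^'n \<Rightarrow> (real^'n^'n)^'k) \<Rightarrow> real"
    and B :: "(real^'n \<Rightarrow> (real^'n^'n)^'k) \<Rightarrow> (real^'n \<Rightarrow> (real^'n)^'k) \<Rightarrow> (real^'n \<Rightarrow> (real^'n)^'k) \<Rightarrow> real"
    and L :: "('k \<Rightarrow> real^'n \<Rightarrow> real) \<Rightarrow> real"
    and Pd :: "'x::euclidean_space \<Rightarrow> real^'n \<Rightarrow> real"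
    and Gd :: "'x \<Rightarrow> real^'n \<Rightarrow> real^'n"
    and Hd :: "'x \<Rightarrow> real^'n \<Rightarrow> real^'n^'n"
    and Ed :: "'x \<Rightarrow> real^'n \<Rightarrow> real"
    and \<alpha> :: real
  assumes A_cont: "cont_bilinear_on \<Omega> A"
    and alpha_pos: "\<alpha> > 0"
    and A_coercive: "\<forall>\<Xi>. Lp_on 2 \<Omega> \<Xi> \<longrightarrow> A \<Xi> \<Xi> \<ge> \<alpha> * (Lp_norm 2 \<Omega> \<Xi>)\<^sup>2"
    and B_cont: "cont_trilinear_on \<Omega> B"
    and B_skew: "\<forall>\<Xi> \<Theta>. Lp_on 2 \<Omega> \<Xi> \<and> Lp_on 4 \<Omega> \<Theta> \<longrightarrow> B \<Xi> \<Theta> \<Theta> = 0"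
    and L_cont: "cont_linear_functional \<Omega> L"
    and HD: "hessian_discretisation \<Omega> Pd Gd Hd"
    and ED: "companion \<Omega> Ed"
begin

definition a\<^sub>D :: "'x^'k \<Rightarrow> 'x^'k \<Rightarrow> real" where
  "a\<^sub>D \<Psi> \<Phi> = A (compw Hd \<Psi>) (compw Hd \<Phi>)"

definition b\<^sub>D :: "'x^'k \<Rightarrow> 'x^'k \<Rightarrow> 'x^'k \<Rightarrow> real" where
  "b\<^sub>D \<Psi> \<Theta> \<Phi> = B (compw Hd \<Psi>) (compw Gd \<Theta>) (compw Gd \<Phi>)"

definition l\<^sub>D :: "'x^'k \<Rightarrow> real" where
  "l\<^sub>D \<Phi> = L (\<lambda>i. Ed (\<Phi> $ i))"

abbreviation norm\<^sub>D :: "'x^'k \<Rightarrow> real" where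
  "norm\<^sub>D \<Psi> \<equiv> Lp_norm 2 \<Omega> (compw Hd \<Psi>)"

lemma sol_iff: "hessian_scheme_sol A B L Gd Hd Ed \<Psi> \<longleftrightarrow> (\<forall>\<Phi>. a\<^sub>D \<Psi> \<Phi> + b\<^sub>D \<Psi> \<Psi> \<Phi> = l\<^sub>D \<Phi>)"
  unfolding hessian_scheme_sol_def a\<^sub>D_def b\<^sub>D_def l\<^sub>D_def ..

lemma Hd_L2: "Lp_on 2 \<Omega> (Hd w)" and Gd_L4: "Lp_on 4 \<Omega> (Gd w)"
  and Hd_linear: "linear (\<lambda>w. Hd w x)" and Gd_linear: "linear (\<lambda>w. Gd w x)"
  and Ed_linear: "linear (\<lambda>w. Ed w x)" and Ed_H20: "H20 \<Omega> (Ed w)"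
  using HD ED unfolding hessian_discretisation_def companion_def by auto

lemma disc_norm_scaleR: "disc_norm \<Omega> Hd (c *\<^sub>R w) = \<bar>c\<bar> * disc_norm \<Omega> Hd w"
proof -
  have "Hd (c *\<^sub>R w) = (\<lambda>x. c *\<^sub>R Hd w x)" using linear_scale[OF Hd_linear] by blast
  then show ?thesis unfolding disc_norm_def by (simp add: Lp_norm_scaleR)
qed

lemma compw_Hd_L2: "Lp_on 2 \<Omega> (compw Hd \<Psi>)"
  using Hd_L2 by (rule Lp_on_2_compw)

lemma compw_Gd_L4: "Lp_on 4 \<Omega> (compw Gd \<Psi>)"
  using Gd_L4 by (rule Lp_on_4_compw)

lemma A_comb:
  assumes "Lp_on 2 \<Omega> u" "Lp_on 2 \<Omega> v" "Lp_on 2 \<Omega> w"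
  shows "A (lincomb a u b v) w = a * A u w + b * A v w"
    and "A w (lincomb a u b v) = a * A w u + b * A w v"
  using A_cont assms unfolding cont_bilinear_on_def by blast+

lemma B_comb:
  "\<lbrakk>Lp_on 2 \<Omega> u; Lp_on 2 \<Omega> u'; Lp_on 4 \<Omega> v; Lp_on 4 \<Omega> w\<rbrakk> \<Longrightarrow>
     B (lincomb a u b u') v w = a * B u v w + b * B u' v w"
  "\<lbrakk>Lp_on 2 \<Omega> u; Lp_on 4 \<Omega> v; Lp_on 4 \<Omega> v'; Lp_on 4 \<Omega> w\<rbrakk> \<Longrightarrow>
     B u (lincomb a v b v') w = a * B u v w + b * B u v' w"
  "\<lbrakk>Lp_on 2 \<Omega> u; Lp_on 4 \<Omega> v; Lp_on 4 \<Omega> w; Lp_on 4 \<Omega> w'\<rbrakk> \<Longrightarrow>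
     B u v (lincomb a w b w') = a * B u v w + b * B u v w'"
  using B_cont unfolding cont_trilinear_on_def by blast+

lemma bilinear_a\<^sub>D: "bilinear a\<^sub>D"
  unfolding bilinear_def a\<^sub>D_def
  by (auto intro!: linearI_comb simp: compw_comb[OF Hd_linear] A_comb compw_Hd_L2)

lemma bilinear_b\<^sub>D: "bilinear (\<lambda>\<Psi> \<Theta>. b\<^sub>D \<Psi> \<Theta> \<Phi>)"
  unfolding bilinear_def b\<^sub>D_def
  by (auto intro!: linearI_comb simp: compw_comb[OF Hd_linear] compw_comb[OF Gd_linear]
      B_comb compw_Hd_L2 compw_Gd_L4)

lemma linear_b\<^sub>D: "linear (b\<^sub>D \<Psi> \<Theta>)"
  unfolding b\<^sub>D_def
  by (auto intro!: linearI_comb simp: compw_comb[OF Gd_linear] B_comb compw_Hd_L2 compw_Gd_L4)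

lemma b\<^sub>D_skew: "b\<^sub>D \<Psi> \<Theta> \<Theta> = 0"
  using B_skew compw_Hd_L2 compw_Gd_L4 unfolding b\<^sub>D_def by blast

lemma linear_l\<^sub>D: "linear l\<^sub>D"
proof (rule linearI_comb)
  fix a b and \<Psi> \<Phi> :: "'x^'k"
  have "(\<lambda>i. Ed ((a *\<^sub>R \<Psi> + b *\<^sub>R \<Phi>) $ i)) = (\<lambda>i. lincomb a (Ed (\<Psi> $ i)) b (Ed (\<Phi> $ i)))"
    using linear_add[OF Ed_linear] linear_scale[OF Ed_linear]
    by (simp add: lincomb_def fun_eq_iff)
  then show "l\<^sub>D (a *\<^sub>R \<Psi> + b *\<^sub>R \<Phi>) = a *\<^sub>R l\<^sub>D \<Psi> + b *\<^sub>R l\<^sub>D \<Phi>"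
    using L_cont Ed_H20 unfolding l\<^sub>D_def cont_linear_functional_def H20k_def by auto
qed

lemma a\<^sub>D_coercive: "\<alpha> * (norm\<^sub>D \<Psi>)\<^sup>2 \<le> a\<^sub>D \<Psi> \<Psi>"
  using A_coercive compw_Hd_L2 unfolding a\<^sub>D_def by blast

lemma norm\<^sub>D_eq: "norm\<^sub>D \<Psi> = L2_set (\<lambda>i. disc_norm \<Omega> Hd (\<Psi> $ i)) UNIV"
  unfolding disc_norm_def using Hd_L2 by (rule Lp_norm_2_compw)

lemma norm\<^sub>D_zero: "norm\<^sub>D 0 = 0"
  unfolding norm\<^sub>D_eq using disc_norm_scaleR[of 0 0] by (simp add: L2_set_def)

lemma norm\<^sub>D_ge: "\<exists>c>0. \<forall>\<Psi>. c * norm \<Psi> \<le> norm\<^sub>D \<Psi>"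
proof (rule Lp_norm_2_linear_family_ge)
  show "linear (\<lambda>\<Psi>. compw Hd \<Psi> x)" for x
    by (rule linearI_comb) (simp add: compw_comb[OF Hd_linear] lincomb_def)
  fix \<Psi> :: "'x^'k" assume "norm\<^sub>D \<Psi> = 0"
  then have "disc_norm \<Omega> Hd (\<Psi> $ i) = 0" for i
    unfolding norm\<^sub>D_eq by (simp add: L2_set_eq_0_iff)
  then show "\<Psi> = 0"
    using HD unfolding hessian_discretisation_def by (simp add: vec_eq_iff)
qed (rule compw_Hd_L2)

theorem sol_exists: "\<exists>\<Psi>. hessian_scheme_sol A B L Gd Hd Ed \<Psi>"
proof -
  define F where "F \<Psi> \<Phi> = a\<^sub>D \<Psi> \<Phi> + b\<^sub>D \<Psi> \<Psi> \<Phi> - l\<^sub>D \<Phi>" for \<Psi> \<Phi>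
  obtain c where c: "0 < c" "\<And>\<Psi>. c * norm \<Psi> \<le> norm\<^sub>D \<Psi>" using norm\<^sub>D_ge by blast
  obtain K where K: "\<And>\<Psi>. norm (l\<^sub>D \<Psi>) \<le> K * norm \<Psi>"
    using linear_bounded[OF linear_l\<^sub>D] by blast
  have "\<exists>\<Psi>. \<forall>\<Phi>. F \<Psi> \<Phi> = 0"
  proof (rule coercive_form_has_root)
    show "linear (F \<Psi>)" for \<Psi>
      using bilinear_a\<^sub>D linear_b\<^sub>D linear_l\<^sub>D unfolding F_def bilinear_def
      by (intro linear_compose_sub linear_compose_add) auto
    show "continuous_on UNIV (\<lambda>\<Psi>. F \<Psi> \<Phi>)" for \<Phi>
    proof -
      have "continuous_on UNIV (\<lambda>\<Psi>. a\<^sub>D \<Psi> \<Phi>)"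
        using bilinear_a\<^sub>D by (intro linear_continuous_on) (auto simp: bilinear_def linear_conv_bounded_linear)
      moreover have "continuous_on UNIV (\<lambda>\<Psi>. b\<^sub>D \<Psi> \<Psi> \<Phi>)"
        using bilinear_continuous_on_compose[OF continuous_on_id continuous_on_id bilinear_b\<^sub>D] by simp
      ultimately show ?thesis
        unfolding F_def by (intro continuous_intros)
    qed
    show "0 < \<alpha> * c\<^sup>2" using alpha_pos c by simp
    show "\<alpha> * c\<^sup>2 * (norm \<Psi>)\<^sup>2 - K * norm \<Psi> \<le> F \<Psi> \<Psi>" for \<Psi>
    proof -
      have "\<alpha> * (c * norm \<Psi>)\<^sup>2 \<le> \<alpha> * (norm\<^sub>D \<Psi>)\<^sup>2"
        using c alpha_pos by (intro mult_left_mono power_mono) auto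
      then show ?thesis
        using a\<^sub>D_coercive[of \<Psi>] K[of \<Psi>] unfolding F_def b\<^sub>D_skew
        by (simp add: power_mult_distrib mult_ac)
    qed
  qed
  then show ?thesis unfolding sol_iff F_def by simp
qed

lemma sol_energy:
  assumes "hessian_scheme_sol A B L Gd Hd Ed \<Psi>"
  shows "\<alpha> * (norm\<^sub>D \<Psi>)\<^sup>2 \<le> l\<^sub>D \<Psi>"
  using assms a\<^sub>D_coercive[of \<Psi>] b\<^sub>D_skew[of \<Psi> \<Psi>] unfolding sol_iff by (metis add.right_neutral)

lemma sol_difference:
  assumes "hessian_scheme_sol A B L Gd Hd Ed \<Psi>\<^sub>1" "hessian_scheme_sol A B L Gd Hd Ed \<Psi>\<^sub>2"
  shows "a\<^sub>D (\<Psi>\<^sub>1 - \<Psi>\<^sub>2) (\<Psi>\<^sub>1 - \<Psi>\<^sub>2) = - b\<^sub>D (\<Psi>\<^sub>1 - \<Psi>\<^sub>2) \<Psi>\<^sub>2 (\<Psi>\<^sub>1 - \<Psi>\<^sub>2)"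
proof -
  define \<delta> where "\<delta> = \<Psi>\<^sub>1 - \<Psi>\<^sub>2"
  then have \<Psi>\<^sub>1: "\<Psi>\<^sub>1 = \<delta> + \<Psi>\<^sub>2" by simp
  have "a\<^sub>D \<Psi>\<^sub>1 \<delta> + b\<^sub>D \<Psi>\<^sub>1 \<Psi>\<^sub>1 \<delta> = a\<^sub>D \<Psi>\<^sub>2 \<delta> + b\<^sub>D \<Psi>\<^sub>2 \<Psi>\<^sub>2 \<delta>"
    using assms unfolding sol_iff by simp
  moreover have "a\<^sub>D \<Psi>\<^sub>1 \<delta> = a\<^sub>D \<delta> \<delta> + a\<^sub>D \<Psi>\<^sub>2 \<delta>"
    unfolding \<Psi>\<^sub>1 by (rule bilinear_ladd[OF bilinear_a\<^sub>D])
  moreover have "b\<^sub>D \<Psi>\<^sub>1 \<Psi>\<^sub>1 \<delta> = b\<^sub>D \<delta> \<Psi>\<^sub>2 \<delta> + b\<^sub>D \<Psi>\<^sub>2 \<Psi>\<^sub>2 \<delta>"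
    unfolding \<Psi>\<^sub>1 using b\<^sub>D_skew
    by (simp add: bilinear_ladd[OF bilinear_b\<^sub>D] bilinear_radd[OF bilinear_b\<^sub>D])
  ultimately show ?thesis unfolding \<delta>_def by simp
qed

lemma Lp_norm_4_compw_Gd_le: "Lp_norm 4 \<Omega> (compw Gd \<Theta>) \<le> C_disc \<Omega> Pd Gd Hd * norm\<^sub>D \<Theta>"
proof -
  have "Lp_norm 4 \<Omega> (compw Gd \<Theta>) \<le> L2_set (\<lambda>i. Lp_norm 4 \<Omega> (Gd (\<Theta> $ i))) UNIV"
    using Gd_L4 by (rule Lp_norm_4_compw_le)
  also have "\<dots> \<le> L2_set (\<lambda>i. C_disc \<Omega> Pd Gd Hd * disc_norm \<Omega> Hd (\<Theta> $ i)) UNIV"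
    by (intro L2_set_mono Lp_norm_4_le_C_disc[OF HD] Lp_norm_nonneg)
  also have "\<dots> = C_disc \<Omega> Pd Gd Hd * norm\<^sub>D \<Theta>"
    unfolding norm\<^sub>D_eq by (simp add: L2_set_right_distrib C_disc_nonneg[OF HD])
  finally show ?thesis .
qed

lemma abs_b\<^sub>D_le:
  "\<bar>b\<^sub>D \<Psi> \<Theta> \<Phi>\<bar> \<le> trilinear_norm \<Omega> B * (C_disc \<Omega> Pd Gd Hd)\<^sup>2 * norm\<^sub>D \<Psi> * norm\<^sub>D \<Theta> * norm\<^sub>D \<Phi>"
proof -
  have "\<bar>b\<^sub>D \<Psi> \<Theta> \<Phi>\<bar> \<le> trilinear_norm \<Omega> B * norm\<^sub>D \<Psi> * Lp_norm 4 \<Omega> (compw Gd \<Theta>) * Lp_norm 4 \<Omega> (compw Gd \<Phi>)"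
    unfolding b\<^sub>D_def by (rule abs_le_trilinear_norm[OF B_cont compw_Hd_L2 compw_Gd_L4 compw_Gd_L4])
  also have "\<dots> \<le> trilinear_norm \<Omega> B * norm\<^sub>D \<Psi> * (C_disc \<Omega> Pd Gd Hd * norm\<^sub>D \<Theta>) * (C_disc \<Omega> Pd Gd Hd * norm\<^sub>D \<Phi>)"
    using trilinear_norm_nonneg[OF B_cont]
    by (intro mult_mono Lp_norm_4_compw_Gd_le mult_nonneg_nonneg)
      (auto simp: Lp_norm_nonneg C_disc_nonneg[OF HD])
  finally show ?thesis by (simp add: power2_eq_square mult_ac)
qed

end

locale hessian_scheme_bounded = hessian_scheme +
  fixes C2eq :: real
  assumes C2eq: "\<forall>\<phi>. H20 \<Omega> \<phi> \<longrightarrow> H2_norm \<Omega> \<phi> \<le> C2eq * H2_seminorm \<Omega> \<phi>"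
    and Gamma_fin: "Gamma_finite \<Omega> Hd Ed"
begin

lemma C2eq_nonneg:
  assumes "H20 \<Omega> \<phi>" "H2_norm \<Omega> \<phi> \<noteq> 0"
  shows "0 \<le> C2eq"
proof (rule ccontr)
  assume "\<not> 0 \<le> C2eq"
  then have "C2eq * H2_seminorm \<Omega> \<phi> \<le> 0"
    unfolding H2_seminorm_def by (simp add: Lp_norm_nonneg mult_nonpos_nonneg)
  then show False
    using C2eq assms H2_norm_nonneg[of \<Omega> \<phi>] by force
qed

lemma H2_norm_Ed_le:
  assumes "0 \<le> C2eq" "w \<noteq> 0"
  shows "H2_norm \<Omega> (Ed w) \<le> C2eq * Gamma_E \<Omega> Hd Ed * disc_norm \<Omega> Hd w"
proof -
  have "H2_norm \<Omega> (Ed w) \<le> C2eq * Lp_norm 2 \<Omega> (whess \<Omega> (Ed w))"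
    using C2eq Ed_H20 unfolding H2_seminorm_def by blast
  also have "\<dots> \<le> C2eq * (Gamma_E \<Omega> Hd Ed * disc_norm \<Omega> Hd w)"
    using assms Lp_norm_whess_le_Gamma_E[OF HD Gamma_fin] by (intro mult_left_mono)
  finally show ?thesis by (simp add: mult.assoc)
qed

text \<open>\<open>Gamma_E\<close> only controls \<open>Ed \<psi>\<close> for \<open>\<psi> \<noteq> 0\<close>: for the zero function, \<open>wgrad\<close> and
  \<open>whess\<close> are \<open>SOME\<close>-chosen limits whose vanishing would require closability of the weak
  derivatives. Hence the bound is proved for tuples with nonzero components and then extended.\<close>

lemma abs_l\<^sub>D_le:
  assumes "l\<^sub>D \<Psi> \<noteq> 0"
  shows "\<bar>l\<^sub>D \<Psi>\<bar> \<le> dual_norm \<Omega> L * C2eq * Gamma_E \<Omega> Hd Ed * norm\<^sub>D \<Psi>"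
proof -
  have EH: "H20k \<Omega> (\<lambda>i. Ed (\<Phi> $ i))" for \<Phi>
    unfolding H20k_def using Ed_H20 by blast
  have "(\<lambda>i. Ed (\<Psi> $ i)) \<noteq> (\<lambda>i x. 0)"
    using assms cont_linear_functional_zero[OF L_cont EH] unfolding l\<^sub>D_def by auto
  then have D: "0 \<le> dual_norm \<Omega> L" by (rule dual_norm_nonneg[OF L_cont EH])
  have l_le: "\<bar>l\<^sub>D \<Phi>\<bar> \<le> dual_norm \<Omega> L * H2k_norm \<Omega> (\<lambda>i. Ed (\<Phi> $ i))" for \<Phi>
    unfolding l\<^sub>D_def by (rule abs_le_dual_norm[OF L_cont EH D])
  have "H2k_norm \<Omega> (\<lambda>i. Ed (\<Psi> $ i)) \<noteq> 0" using l_le[of \<Psi>] assms by auto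
  then have "(\<Sum>i\<in>UNIV. (H2_norm \<Omega> (Ed (\<Psi> $ i)))\<^sup>2) \<noteq> 0" unfolding H2k_norm_def by auto
  then obtain i where "H2_norm \<Omega> (Ed (\<Psi> $ i)) \<noteq> 0" using sum.neutral by force
  then have "0 \<le> C2eq" using Ed_H20 by (rule C2eq_nonneg[rotated])
  have bound: "\<bar>l\<^sub>D \<Phi>\<bar> \<le> dual_norm \<Omega> L * C2eq * Gamma_E \<Omega> Hd Ed * L2_set (\<lambda>i. disc_norm \<Omega> Hd (\<Phi> $ i)) UNIV"
    if "\<forall>i. \<Phi> $ i \<noteq> 0" for \<Phi>
  proof -
    have "H2k_norm \<Omega> (\<lambda>i. Ed (\<Phi> $ i)) \<le> L2_set (\<lambda>i. C2eq * Gamma_E \<Omega> Hd Ed * disc_norm \<Omega> Hd (\<Phi> $ i)) UNIV"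
      unfolding H2k_norm_eq using H2_norm_Ed_le[OF \<open>0 \<le> C2eq\<close>] that
      by (intro L2_set_mono) (auto simp: H2_norm_nonneg)
    also have "\<dots> = C2eq * Gamma_E \<Omega> Hd Ed * L2_set (\<lambda>i. disc_norm \<Omega> Hd (\<Phi> $ i)) UNIV"
      using \<open>0 \<le> C2eq\<close> Gamma_E_nonneg[OF Gamma_fin] by (simp add: L2_set_right_distrib)
    finally show ?thesis
      using l_le[of \<Phi>] D by (simp add: mult_left_mono mult.assoc order_trans)
  qed
  have "0 \<le> dual_norm \<Omega> L * C2eq * Gamma_E \<Omega> Hd Ed"
    using D \<open>0 \<le> C2eq\<close> Gamma_E_nonneg[OF Gamma_fin] by simp
  from bound_extends_to_zero_components[OF linear_l\<^sub>D disc_norm_scaleR this bound]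
  show ?thesis unfolding norm\<^sub>D_eq .
qed

lemma sol_norm\<^sub>D_le:
  assumes sol: "hessian_scheme_sol A B L Gd Hd Ed \<Psi>" and "\<Psi> \<noteq> 0"
  shows "\<alpha> * norm\<^sub>D \<Psi> \<le> dual_norm \<Omega> L * C2eq * Gamma_E \<Omega> Hd Ed"
proof -
  obtain c where "0 < c" "c * norm \<Psi> \<le> norm\<^sub>D \<Psi>" using norm\<^sub>D_ge by blast
  moreover have "0 < c * norm \<Psi>" using \<open>0 < c\<close> \<open>\<Psi> \<noteq> 0\<close> by simp
  ultimately have pos: "0 < norm\<^sub>D \<Psi>" by linarith
  have energy: "\<alpha> * (norm\<^sub>D \<Psi>)\<^sup>2 \<le> l\<^sub>D \<Psi>" by (rule sol_energy[OF sol])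
  moreover have "0 < \<alpha> * (norm\<^sub>D \<Psi>)\<^sup>2" using alpha_pos pos by simp
  ultimately have "l\<^sub>D \<Psi> \<noteq> 0" by linarith
  have "\<alpha> * norm\<^sub>D \<Psi> * norm\<^sub>D \<Psi> \<le> l\<^sub>D \<Psi>"
    using energy by (simp add: power2_eq_square mult.assoc)
  also have "\<dots> \<le> \<bar>l\<^sub>D \<Psi>\<bar>" by simp
  also have "\<dots> \<le> dual_norm \<Omega> L * C2eq * Gamma_E \<Omega> Hd Ed * norm\<^sub>D \<Psi>"
    using \<open>l\<^sub>D \<Psi> \<noteq> 0\<close> by (rule abs_l\<^sub>D_le)
  finally show ?thesis using pos by simp
qed

theorem sol_unique:
  assumes small: "dual_norm \<Omega> L * trilinear_norm \<Omega> B * (C_disc \<Omega> Pd Gd Hd)\<^sup>2 * Gamma_E \<Omega> Hd Ed * C2eq < \<alpha>\<^sup>2"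
    and sol\<^sub>1: "hessian_scheme_sol A B L Gd Hd Ed \<Psi>\<^sub>1" and sol\<^sub>2: "hessian_scheme_sol A B L Gd Hd Ed \<Psi>\<^sub>2"
  shows "\<Psi>\<^sub>1 = \<Psi>\<^sub>2"
proof (rule ccontr)
  assume "\<Psi>\<^sub>1 \<noteq> \<Psi>\<^sub>2"
  define \<delta> where "\<delta> = \<Psi>\<^sub>1 - \<Psi>\<^sub>2"
  define TC where "TC = trilinear_norm \<Omega> B * (C_disc \<Omega> Pd Gd Hd)\<^sup>2"
  have TC: "0 \<le> TC" unfolding TC_def using trilinear_norm_nonneg[OF B_cont] by simp
  obtain c where "0 < c" "c * norm \<delta> \<le> norm\<^sub>D \<delta>" using norm\<^sub>D_ge by blast
  moreover have "0 < c * norm \<delta>" using \<open>0 < c\<close> \<open>\<Psi>\<^sub>1 \<noteq> \<Psi>\<^sub>2\<close> unfolding \<delta>_def by simp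
  ultimately have pos: "0 < norm\<^sub>D \<delta>" by linarith
  have "\<alpha> * (norm\<^sub>D \<delta>)\<^sup>2 \<le> a\<^sub>D \<delta> \<delta>" by (rule a\<^sub>D_coercive)
  also have "\<dots> \<le> \<bar>b\<^sub>D \<delta> \<Psi>\<^sub>2 \<delta>\<bar>" unfolding \<delta>_def sol_difference[OF sol\<^sub>1 sol\<^sub>2] by simp
  also have "\<dots> \<le> TC * norm\<^sub>D \<Psi>\<^sub>2 * (norm\<^sub>D \<delta>)\<^sup>2"
    using abs_b\<^sub>D_le[of \<delta> \<Psi>\<^sub>2 \<delta>] unfolding TC_def by (simp add: power2_eq_square mult_ac)
  finally have "\<alpha> \<le> TC * norm\<^sub>D \<Psi>\<^sub>2" using pos by simp
  then have "\<Psi>\<^sub>2 \<noteq> 0" using alpha_pos norm\<^sub>D_zero by auto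
  have "\<alpha>\<^sup>2 \<le> TC * (\<alpha> * norm\<^sub>D \<Psi>\<^sub>2)"
    using \<open>\<alpha> \<le> TC * norm\<^sub>D \<Psi>\<^sub>2\<close> alpha_pos by (simp add: power2_eq_square mult_left_mono mult_ac)
  also have "\<dots> \<le> TC * (dual_norm \<Omega> L * C2eq * Gamma_E \<Omega> Hd Ed)"
    using sol_norm\<^sub>D_le[OF sol\<^sub>2 \<open>\<Psi>\<^sub>2 \<noteq> 0\<close>] TC by (rule mult_left_mono)
  finally show False using small unfolding TC_def by (simp add: mult_ac)
qed

end

theorem theorem3p3:
  fixes \<Omega> :: "(real^'n::finite) set"
    and A :: "(real^'n \<Rightarrow> (real^'n^'n)^'k::finite) \<Rightarrow> (real^'n \<Rightarrow> (real^'n^'n)^'k) \<Rightarrow> real"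
    and B :: "(real^'n \<Rightarrow> (real^'n^'n)^'k) \<Rightarrow> (real^'n \<Rightarrow> (real^'n)^'k) \<Rightarrow> (real^'n \<Rightarrow> (real^'n)^'k) \<Rightarrow> real"
    and L :: "('k \<Rightarrow> real^'n \<Rightarrow> real) \<Rightarrow> real"
    and Pd :: "'x::euclidean_space \<Rightarrow> real^'n \<Rightarrow> real"
    and Gd :: "'x \<Rightarrow> real^'n \<Rightarrow> real^'n"
    and Hd :: "'x \<Rightarrow> real^'n \<Rightarrow> real^'n^'n"
    and Ed :: "'x \<Rightarrow> real^'n \<Rightarrow> real"
    and \<alpha> C2eq :: real
  assumes dom: "open \<Omega>" "connected \<Omega>" "bounded \<Omega>" "\<Omega> \<noteq> {}"
    and C2eq: "\<forall>\<phi>. H20 \<Omega> \<phi> \<longrightarrow> H2_norm \<Omega> \<phi> \<le> C2eq * H2_seminorm \<Omega> \<phi>"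
    and A_cont: "cont_bilinear_on \<Omega> A"
    and alpha_pos: "\<alpha> > 0"
    and A_coercive: "\<forall>\<Xi>. Lp_on 2 \<Omega> \<Xi> \<longrightarrow> A \<Xi> \<Xi> \<ge> \<alpha> * (Lp_norm 2 \<Omega> \<Xi>)\<^sup>2"
    and B_cont: "cont_trilinear_on \<Omega> B"
    and B_skew: "\<forall>\<Xi> \<Theta>. Lp_on 2 \<Omega> \<Xi> \<and> Lp_on 4 \<Omega> \<Theta> \<longrightarrow> B \<Xi> \<Theta> \<Theta> = 0"
    and L_cont: "cont_linear_functional \<Omega> L"
    and HD: "hessian_discretisation \<Omega> Pd Gd Hd"
    and ED: "companion \<Omega> Ed"
    and Gamma_fin: "Gamma_finite \<Omega> Hd Ed"
  shows "(\<exists>\<Psi>::'x^'k. hessian_scheme_sol A B L Gd Hd Ed \<Psi>) \<and>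
         (dual_norm \<Omega> L * trilinear_norm \<Omega> B * (C_disc \<Omega> Pd Gd Hd)\<^sup>2 * Gamma_E \<Omega> Hd Ed * C2eq < \<alpha>\<^sup>2
          \<longrightarrow> (\<forall>\<Psi>1 \<Psi>2::'x^'k. hessian_scheme_sol A B L Gd Hd Ed \<Psi>1 \<and>
                 hessian_scheme_sol A B L Gd Hd Ed \<Psi>2 \<longrightarrow> \<Psi>1 = \<Psi>2))"
proof -
  interpret hessian_scheme_bounded \<Omega> A B L Pd Gd Hd Ed \<alpha> C2eq
    using C2eq A_cont alpha_pos A_coercive B_cont B_skew L_cont HD ED Gamma_fin
    by unfold_locales auto
  show ?thesis using sol_exists sol_unique by blast
qed

end
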